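(* Let $n\in\mathbb N$. (a) $L^{(n),1}\subseteq\mathcal A_c^{n+1}$, and it is a linear subspace. (b) $L^{(n),1}$ is not a closed subspace of $\mathcal A_c^{n+1}$ with respect to $\|\cdot\|_{a,n+1}$. (c) The norms $\|\cdot\|^{(n)}_1$ and $\|\cdot\|_{a,n+1}$ are not equivalent on $L^{(n),1}$.
   Context: $D^n$ denotes the $n$th distributional derivative on $\mathcal S'$. $L^{(n),1}=\{f\in\mathcal S' : f=D^nF \text{ for some } F\in L^1(\mathbb R)\}$; such $F$ is unique and $\|f\|^{(n)}_1:=\|F\|_1$. $\mathcal B_c$ is the set of continuous functions $F:\mathbb R\to\mathbb R$ having finite limits at $\pm\infty$ with $\lim_{x\to-\infty}F(x)=0$. For $m\in\mathbb N$, $\mathcal A_c^m=\{f\in\mathcal S' : f=D^mF \text{ for some } F\in\mathcal B_c\}$; such $F$ is unique, and $\|f\|_{a,m}:=\|F\|_\infty=\sup_{x}|F(x)|$, making $\mathcal A_c^m$ a Banach space. *)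

theory Defs
  imports "HOL-Analysis.Analysis"
begin

definition schwartz :: "(real \<Rightarrow> real) set" where
  "schwartz = {\<phi>. (\<forall>k x. ((deriv ^^ k) \<phi>) differentiable (at x)) \<and>
      (\<forall>k m. bounded (range (\<lambda>x. \<bar>x\<bar> ^ m * (deriv ^^ k) \<phi> x)))}"

text \<open>Tempered distributions are represented as functionals on test functions,
  normalised to 0 outside the Schwartz class. distD n F is the n-th distributional
  derivative of the (locally integrable, tempered) function F:
  test function phi is mapped to (-1)^n times the integral of F times phi^(n).\<close>
definition distD :: "nat \<Rightarrow> (real \<Rightarrow> real) \<Rightarrow> ((real \<Rightarrow> real) \<Rightarrow> real)" where
  "distD n F = (\<lambda>\<phi>. if \<phi> \<in> schwartz
      then (-1) ^ n * (\<integral>x. F x * (deriv ^^ n) \<phi> x \<partial>lborel) else 0)"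

definition L1n :: "nat \<Rightarrow> ((real \<Rightarrow> real) \<Rightarrow> real) set" where
  "L1n n = {f. \<exists>F. integrable lborel F \<and> f = distD n F}"

definition norm_L1n :: "nat \<Rightarrow> ((real \<Rightarrow> real) \<Rightarrow> real) \<Rightarrow> real" where
  "norm_L1n n f = (let F = (SOME F. integrable lborel F \<and> f = distD n F)
                   in \<integral>x. \<bar>F x\<bar> \<partial>lborel)"

definition Bc :: "(real \<Rightarrow> real) set" where
  "Bc = {F. continuous_on UNIV F \<and> (\<exists>l. (F \<longlongrightarrow> l) at_top) \<and> (F \<longlongrightarrow> 0) at_bot}"

definition Ac :: "nat \<Rightarrow> ((real \<Rightarrow> real) \<Rightarrow> real) set" where
  "Ac m = {f. \<exists>F\<in>Bc. f = distD m F}"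

definition norm_Ac :: "nat \<Rightarrow> ((real \<Rightarrow> real) \<Rightarrow> real) \<Rightarrow> real" where
  "norm_Ac m f = (let F = (SOME F. F \<in> Bc \<and> f = distD m F) in SUP x. \<bar>F x\<bar>)"

end

theory Submission
  imports Defs "HOL-Probability.Sinc_Integral" "HOL-Computational_Algebra.Polynomial"
begin

section \<open>Schwartz functions\<close>

lemma schwartz_has_deriv:
  assumes "\<phi> \<in> schwartz"
  shows "((deriv ^^ k) \<phi> has_real_derivative (deriv ^^ Suc k) \<phi> x) (at x)"
proof -
  have "((deriv ^^ k) \<phi>) differentiable (at x)" using assms by (auto simp: schwartz_def)
  then show ?thesis by (simp add: DERIV_deriv_iff_real_differentiable)
qed

lemma schwartz_continuous_on: "\<phi> \<in> schwartz \<Longrightarrow> continuous_on UNIV ((deriv ^^ k) \<phi>)"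
  using schwartz_has_deriv DERIV_isCont by (blast intro: continuous_at_imp_continuous_on)

lemma schwartz_measurable[measurable]: "\<phi> \<in> schwartz \<Longrightarrow> (deriv ^^ k) \<phi> \<in> borel_measurable borel"
  by (simp add: borel_measurable_continuous_onI schwartz_continuous_on)

lemma schwartz_weighted_bound:
  assumes "\<phi> \<in> schwartz"
  shows "\<exists>B. \<forall>x. \<bar>x\<bar> ^ m * \<bar>(deriv ^^ k) \<phi> x\<bar> \<le> B"
proof -
  have "bounded (range (\<lambda>x. \<bar>x\<bar> ^ m * (deriv ^^ k) \<phi> x))" using assms by (auto simp: schwartz_def)
  then obtain B where "\<forall>y\<in>range (\<lambda>x. \<bar>x\<bar> ^ m * (deriv ^^ k) \<phi> x). norm y \<le> B"
    by (auto simp: bounded_iff)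
  then show ?thesis by (auto simp: abs_mult)
qed

lemma schwartzI:
  assumes "\<And>k x. ((deriv ^^ k) f has_real_derivative (deriv ^^ Suc k) f x) (at x)"
    and "\<And>k m. \<exists>B. \<forall>x. \<bar>x\<bar> ^ m * \<bar>(deriv ^^ k) f x\<bar> \<le> B"
  shows "f \<in> schwartz"
  unfolding schwartz_def
proof (intro CollectI conjI allI)
  fix k x show "(deriv ^^ k) f differentiable at x"
    using assms(1)[of k x] real_differentiable_def by blast
next
  fix k m
  obtain b where "\<forall>x. \<bar>x\<bar> ^ m * \<bar>(deriv ^^ k) f x\<bar> \<le> b" using assms(2) by blast
  then show "bounded (range (\<lambda>x. \<bar>x\<bar> ^ m * (deriv ^^ k) f x))"
    unfolding bounded_iff by (intro exI[of _ b]) (auto simp: abs_mult)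
qed

lemma schwartz_decay:
  assumes "\<phi> \<in> schwartz"
  shows "\<exists>C. \<forall>x. \<bar>(deriv ^^ k) \<phi> x\<bar> \<le> C * inverse (1 + x\<^sup>2)"
proof -
  obtain B0 where B0: "\<forall>x. \<bar>x\<bar> ^ 0 * \<bar>(deriv ^^ k) \<phi> x\<bar> \<le> B0"
    using schwartz_weighted_bound[OF assms] by blast
  obtain B2 where B2: "\<forall>x. \<bar>x\<bar> ^ 2 * \<bar>(deriv ^^ k) \<phi> x\<bar> \<le> B2"
    using schwartz_weighted_bound[OF assms] by blast
  show ?thesis
  proof (intro exI allI)
    fix x
    have "(1 + x\<^sup>2) * \<bar>(deriv ^^ k) \<phi> x\<bar> \<le> B0 + B2"
      using B0[rule_format, of x] B2[rule_format, of x] by (simp add: algebra_simps)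
    moreover have "0 < 1 + x\<^sup>2" by (simp add: add_pos_nonneg)
    ultimately show "\<bar>(deriv ^^ k) \<phi> x\<bar> \<le> (B0 + B2) * inverse (1 + x\<^sup>2)"
      by (simp add: field_simps)
  qed
qed

lemma schwartz_integrable_mult_bounded:
  assumes "\<phi> \<in> schwartz" and [measurable]: "H \<in> borel_measurable borel" and HB: "\<And>x. \<bar>H x\<bar> \<le> B"
  shows "integrable lborel (\<lambda>x. H x * (deriv ^^ k) \<phi> x)"
proof -
  obtain C where C: "\<forall>x. \<bar>(deriv ^^ k) \<phi> x\<bar> \<le> C * inverse (1 + x\<^sup>2)"
    using schwartz_decay[OF assms(1)] by blast
  have "0 \<le> B" using HB[of 0] by linarith
  have "0 \<le> C" using C[rule_format, of 0] by simp
  show ?thesis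
  proof (rule Bochner_Integration.integrable_bound[of _ "\<lambda>x. (B * C) * inverse (1 + x\<^sup>2)"])
    show "integrable lborel (\<lambda>x. (B * C) * inverse (1 + x\<^sup>2))"
      using integrable_inverse_1_plus_square by (simp add: set_integrable_def)
    show "(\<lambda>x. H x * (deriv ^^ k) \<phi> x) \<in> borel_measurable lborel" using assms(1) by measurable
    show "AE x in lborel. norm (H x * (deriv ^^ k) \<phi> x) \<le> norm (B * C * inverse (1 + x\<^sup>2))"
    proof (rule AE_I2)
      fix x
      have "\<bar>H x\<bar> * \<bar>(deriv ^^ k) \<phi> x\<bar> \<le> B * (C * inverse (1 + x\<^sup>2))"
        by (intro mult_mono HB C[rule_format]) (auto simp: \<open>0 \<le> B\<close>)
      then show "norm (H x * (deriv ^^ k) \<phi> x) \<le> norm (B * C * inverse (1 + x\<^sup>2))"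
        using \<open>0 \<le> B\<close> \<open>0 \<le> C\<close> by (simp add: abs_mult mult.assoc)
    qed
  qed
qed

lemma schwartz_integrable: "\<phi> \<in> schwartz \<Longrightarrow> integrable lborel ((deriv ^^ k) \<phi>)"
  using schwartz_integrable_mult_bounded[of \<phi> "\<lambda>_. 1" 1 k] by simp

lemma integrable_mult_schwartz:
  assumes F: "integrable lborel F" and \<phi>: "\<phi> \<in> schwartz"
  shows "integrable lborel (\<lambda>x. F x * (deriv ^^ k) \<phi> x)"
proof -
  obtain B where B: "\<forall>x. \<bar>x\<bar> ^ 0 * \<bar>(deriv ^^ k) \<phi> x\<bar> \<le> B"
    using schwartz_weighted_bound[OF \<phi>] by blast
  show ?thesis
  proof (rule Bochner_Integration.integrable_bound[of _ "\<lambda>x. B * F x"])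
    show "integrable lborel (\<lambda>x. B * F x)" using F by simp
    show "(\<lambda>x. F x * (deriv ^^ k) \<phi> x) \<in> borel_measurable lborel"
      using F schwartz_measurable[OF \<phi>] by measurable
    show "AE x in lborel. norm (F x * (deriv ^^ k) \<phi> x) \<le> norm (B * F x)"
    proof (rule AE_I2)
      fix x
      have "\<bar>F x\<bar> * \<bar>(deriv ^^ k) \<phi> x\<bar> \<le> \<bar>F x\<bar> * \<bar>B\<bar>"
        using B[rule_format, of x] by (intro mult_left_mono) auto
      then show "norm (F x * (deriv ^^ k) \<phi> x) \<le> norm (B * F x)" by (simp add: abs_mult mult.commute)
    qed
  qed
qed

lemma schwartz_tendsto_0_at_top:
  assumes "\<phi> \<in> schwartz"
  shows "((deriv ^^ k) \<phi> \<longlongrightarrow> 0) at_top"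
proof -
  obtain B where B: "\<forall>x. \<bar>x\<bar> ^ 1 * \<bar>(deriv ^^ k) \<phi> x\<bar> \<le> B"
    using schwartz_weighted_bound[OF assms] by blast
  have lim: "((\<lambda>x::real. B * inverse x) \<longlongrightarrow> 0) at_top"
    by (intro tendsto_mult_right_zero tendsto_inverse_0_at_top filterlim_ident)
  have ev: "eventually (\<lambda>x. \<bar>(deriv ^^ k) \<phi> x\<bar> \<le> B * inverse x) at_top"
    using eventually_gt_at_top[of 0]
  proof eventually_elim
    fix x :: real assume "0 < x"
    then show "\<bar>(deriv ^^ k) \<phi> x\<bar> \<le> B * inverse x" using B[rule_format, of x]
      by (simp add: field_simps)
  qed
  show ?thesis
  proof (rule tendsto_sandwich[of "\<lambda>x. - (B * inverse x)" _ _ "\<lambda>x. B * inverse x"])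
    show "eventually (\<lambda>x. - (B * inverse x) \<le> (deriv ^^ k) \<phi> x) at_top"
      using ev by eventually_elim auto
    show "eventually (\<lambda>x. (deriv ^^ k) \<phi> x \<le> B * inverse x) at_top" using ev by eventually_elim auto
    show "((\<lambda>x. - (B * inverse x)) \<longlongrightarrow> 0) at_top" using tendsto_minus[OF lim] by simp
  qed (rule lim)
qed

lemma integral_indicator_Icc_tendsto_atLeast:
  fixes f :: "real \<Rightarrow> real"
  assumes f: "integrable lborel f"
  shows "(\<lambda>k. \<integral>x. indicator {y..y + real k} x * f x \<partial>lborel) \<longlonglongrightarrow> (\<integral>x. indicator {y..} x * f x \<partial>lborel)"
proof (rule integral_dominated_convergence[where w="\<lambda>x. \<bar>f x\<bar>"])
  show "integrable lborel (\<lambda>x. \<bar>f x\<bar>)" using f by (rule integrable_abs)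
  show "(\<lambda>x. indicator {y..} x * f x) \<in> borel_measurable lborel" using f by measurable
  show "(\<lambda>x. indicator {y..y + real i} x * f x) \<in> borel_measurable lborel" for i using f by measurable
  show "AE x in lborel. norm (indicator {y..y + real i} x * f x) \<le> \<bar>f x\<bar>" for i
    by (auto simp: indicator_def)
  show "AE x in lborel. (\<lambda>i. indicator {y..y + real i} x * f x) \<longlonglongrightarrow> indicator {y..} x * f x"
  proof (rule AE_I2)
    fix x
    have "eventually (\<lambda>i. x - y \<le> real i) sequentially"
      using filterlim_real_sequentially by (simp add: filterlim_at_top)
    then have "eventually (\<lambda>i. indicator {y..y + real i} x * f x = indicator {y..} x * f x) sequentially"
      by eventually_elim (auto simp: indicator_def)
    then show "(\<lambda>i. indicator {y..y + real i} x * f x) \<longlonglongrightarrow> indicator {y..} x * f x"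
      by (rule tendsto_eventually)
  qed
qed

text \<open>The tail integral of a derivative, by the fundamental theorem of calculus on [y, y+k]
  and the decay of the primitive at infinity.\<close>
lemma schwartz_tail_integral:
  assumes "\<phi> \<in> schwartz"
  shows "(\<integral>x. indicator {y..} x * (deriv ^^ Suc n) \<phi> x \<partial>lborel) = - (deriv ^^ n) \<phi> y"
proof -
  let ?p = "(deriv ^^ n) \<phi>" and ?q = "(deriv ^^ Suc n) \<phi>"
  have "(\<lambda>k. \<integral>x. indicator {y..y + real k} x * ?q x \<partial>lborel)
          \<longlonglongrightarrow> (\<integral>x. indicator {y..} x * ?q x \<partial>lborel)"
    by (rule integral_indicator_Icc_tendsto_atLeast[OF schwartz_integrable[OF assms]])
  moreover have "(\<integral>x. indicator {y..y + real k} x * ?q x \<partial>lborel) = ?p (y + real k) - ?p y" for k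
  proof -
    have "(\<integral>x. indicator {y..y + real k} x *\<^sub>R ?q x \<partial>lborel) = ?p (y + real k) - ?p y"
    proof (rule integral_FTC_atLeastAtMost)
      show "continuous_on {y..y + real k} ?q"
        using schwartz_continuous_on[OF assms] by (rule continuous_on_subset) auto
      show "(?p has_vector_derivative ?q x) (at x within {y..y + real k})" for x
        using schwartz_has_deriv[OF assms]
        by (simp add: has_real_derivative_iff_has_vector_derivative[symmetric] has_field_derivative_at_within)
    qed simp
    then show ?thesis by simp
  qed
  moreover have "(\<lambda>k. ?p (y + real k) - ?p y) \<longlonglongrightarrow> 0 - ?p y"
  proof (intro tendsto_diff tendsto_const)
    have "filterlim (\<lambda>k. y + real k) at_top sequentially"
      by (rule filterlim_tendsto_add_at_top[OF tendsto_const filterlim_real_sequentially])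
    then show "(\<lambda>k. ?p (y + real k)) \<longlonglongrightarrow> 0"
      using schwartz_tendsto_0_at_top[OF assms] by (rule filterlim_compose[rotated])
  qed
  ultimately show ?thesis using LIMSEQ_unique by fastforce
qed

lemma abs_power_le_shift:
  assumes "\<bar>x::real\<bar> \<le> \<bar>y\<bar> + c" and "0 \<le> c"
  shows "\<bar>x\<bar> ^ m \<le> 2 ^ m * (\<bar>y\<bar> ^ m + c ^ m)"
proof -
  have "\<bar>x\<bar> ^ m \<le> (2 * max \<bar>y\<bar> c) ^ m"
    using assms by (intro power_mono) auto
  also have "\<dots> = 2 ^ m * (max \<bar>y\<bar> c) ^ m" by (simp add: power_mult_distrib)
  also have "(max \<bar>y\<bar> c) ^ m \<le> \<bar>y\<bar> ^ m + c ^ m"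
    using assms by (cases "\<bar>y\<bar> \<le> c") (auto simp: max_def)
  finally show ?thesis by simp
qed

lemma weighted_bound_translate:
  fixes x y c :: real
  assumes B0: "\<And>y. \<bar>g y\<bar> \<le> B0" and Bm: "\<And>y. \<bar>y\<bar> ^ m * \<bar>g y\<bar> \<le> Bm"
    and "\<bar>x\<bar> \<le> \<bar>y\<bar> + c" and "0 \<le> c"
  shows "\<bar>x\<bar> ^ m * \<bar>g y\<bar> \<le> 2 ^ m * (Bm + c ^ m * B0)"
proof -
  have "\<bar>x\<bar> ^ m * \<bar>g y\<bar> \<le> 2 ^ m * (\<bar>y\<bar> ^ m + c ^ m) * \<bar>g y\<bar>"
    using abs_power_le_shift[OF assms(3,4)] by (intro mult_right_mono) auto
  also have "\<dots> = 2 ^ m * (\<bar>y\<bar> ^ m * \<bar>g y\<bar> + c ^ m * \<bar>g y\<bar>)" by (simp add: algebra_simps)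
  also have "\<dots> \<le> 2 ^ m * (Bm + c ^ m * B0)"
    using Bm[of y] B0[of y] \<open>0 \<le> c\<close> by (intro mult_left_mono add_mono) auto
  finally show ?thesis .
qed

lemma translate_has_deriv:
  assumes "\<phi> \<in> schwartz"
  shows "((\<lambda>x. (deriv ^^ k) \<phi> (x - h)) has_real_derivative (deriv ^^ Suc k) \<phi> (x - h) * 1) (at x)"
  by (rule DERIV_chain2[OF schwartz_has_deriv[OF assms]]) (auto intro!: derivative_eq_intros)

lemma schwartz_translate_deriv:
  assumes "\<phi> \<in> schwartz"
  shows "(deriv ^^ k) (\<lambda>x. \<phi> (x - h)) = (\<lambda>x. (deriv ^^ k) \<phi> (x - h))"
proof (induction k)
  case (Suc k)
  have "deriv (\<lambda>x. (deriv ^^ k) \<phi> (x - h)) x = (deriv ^^ Suc k) \<phi> (x - h)" for x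
  proof (rule DERIV_imp_deriv)
    show "((\<lambda>x. (deriv ^^ k) \<phi> (x - h)) has_real_derivative (deriv ^^ Suc k) \<phi> (x - h)) (at x)"
      using translate_has_deriv[OF assms] by simp
  qed
  then show ?case using Suc by auto
qed simp

lemma schwartz_translate:
  assumes "\<phi> \<in> schwartz"
  shows "(\<lambda>x. \<phi> (x - h)) \<in> schwartz"
proof (rule schwartzI)
  fix k x
  show "((deriv ^^ k) (\<lambda>x. \<phi> (x - h)) has_real_derivative (deriv ^^ Suc k) (\<lambda>x. \<phi> (x - h)) x) (at x)"
    unfolding schwartz_translate_deriv[OF assms] using translate_has_deriv[OF assms] by simp
next
  fix k m
  obtain B0 where B0: "\<forall>y. \<bar>y\<bar> ^ 0 * \<bar>(deriv ^^ k) \<phi> y\<bar> \<le> B0"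
    using schwartz_weighted_bound[OF assms] by blast
  obtain Bm where Bm: "\<forall>y. \<bar>y\<bar> ^ m * \<bar>(deriv ^^ k) \<phi> y\<bar> \<le> Bm"
    using schwartz_weighted_bound[OF assms] by blast
  have "\<bar>x\<bar> ^ m * \<bar>(deriv ^^ k) \<phi> (x - h)\<bar> \<le> 2 ^ m * (Bm + \<bar>h\<bar> ^ m * B0)" for x
    by (rule weighted_bound_translate) (use B0 Bm in auto)
  then show "\<exists>B. \<forall>x. \<bar>x\<bar> ^ m * \<bar>(deriv ^^ k) (\<lambda>x. \<phi> (x - h)) x\<bar> \<le> B"
    unfolding schwartz_translate_deriv[OF assms] by blast
qed

lemma schwartz_lincomb_deriv:
  assumes "\<phi> \<in> schwartz" "\<psi> \<in> schwartz"
  shows "(deriv ^^ k) (\<lambda>x. a * \<phi> x + b * \<psi> x) = (\<lambda>x. a * (deriv ^^ k) \<phi> x + b * (deriv ^^ k) \<psi> x)"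
proof (induction k)
  case (Suc k)
  have "deriv (\<lambda>x. a * (deriv ^^ k) \<phi> x + b * (deriv ^^ k) \<psi> x) x =
        a * (deriv ^^ Suc k) \<phi> x + b * (deriv ^^ Suc k) \<psi> x" for x
    by (intro DERIV_imp_deriv DERIV_add DERIV_cmult schwartz_has_deriv assms)
  then show ?case using Suc by auto
qed simp

lemma schwartz_lincomb:
  assumes "\<phi> \<in> schwartz" "\<psi> \<in> schwartz"
  shows "(\<lambda>x. a * \<phi> x + b * \<psi> x) \<in> schwartz"
proof (rule schwartzI)
  fix k x
  show "((deriv ^^ k) (\<lambda>x. a * \<phi> x + b * \<psi> x) has_real_derivative
         (deriv ^^ Suc k) (\<lambda>x. a * \<phi> x + b * \<psi> x) x) (at x)"
    unfolding schwartz_lincomb_deriv[OF assms]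
    by (intro DERIV_add DERIV_cmult schwartz_has_deriv assms)
next
  fix k m
  obtain B1 where B1: "\<forall>x. \<bar>x\<bar> ^ m * \<bar>(deriv ^^ k) \<phi> x\<bar> \<le> B1"
    using schwartz_weighted_bound[OF assms(1)] by blast
  obtain B2 where B2: "\<forall>x. \<bar>x\<bar> ^ m * \<bar>(deriv ^^ k) \<psi> x\<bar> \<le> B2"
    using schwartz_weighted_bound[OF assms(2)] by blast
  have "\<bar>x\<bar> ^ m * \<bar>a * (deriv ^^ k) \<phi> x + b * (deriv ^^ k) \<psi> x\<bar> \<le> \<bar>a\<bar> * B1 + \<bar>b\<bar> * B2" for x
  proof -
    have "\<bar>x\<bar> ^ m * \<bar>a * (deriv ^^ k) \<phi> x + b * (deriv ^^ k) \<psi> x\<bar>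
          \<le> \<bar>x\<bar> ^ m * (\<bar>a\<bar> * \<bar>(deriv ^^ k) \<phi> x\<bar> + \<bar>b\<bar> * \<bar>(deriv ^^ k) \<psi> x\<bar>)"
      by (intro mult_left_mono) (auto simp flip: abs_mult intro: abs_triangle_ineq)
    also have "\<dots> = \<bar>a\<bar> * (\<bar>x\<bar> ^ m * \<bar>(deriv ^^ k) \<phi> x\<bar>) + \<bar>b\<bar> * (\<bar>x\<bar> ^ m * \<bar>(deriv ^^ k) \<psi> x\<bar>)"
      by (simp add: algebra_simps)
    also have "\<dots> \<le> \<bar>a\<bar> * B1 + \<bar>b\<bar> * B2"
      using B1 B2 by (intro add_mono mult_left_mono) auto
    finally show ?thesis .
  qed
  then show "\<exists>B. \<forall>x. \<bar>x\<bar> ^ m * \<bar>(deriv ^^ k) (\<lambda>x. a * \<phi> x + b * \<psi> x) x\<bar> \<le> B"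
    unfolding schwartz_lincomb_deriv[OF assms] by blast
qed

lemma pow_le_exp:
  assumes "0 \<le> (t::real)"
  shows "t ^ d \<le> (real d + 1) ^ d * exp t"
proof (cases "d = 0")
  case False
  have "(t / real d) ^ d \<le> (1 + t / real d) ^ d"
    using assms by (intro power_mono) auto
  also have "\<dots> \<le> exp t"
    using False assms by (intro exp_ge_one_plus_x_over_n_power_n) auto
  finally have "t ^ d \<le> real d ^ d * exp t"
    using False by (simp add: power_divide field_simps)
  also have "\<dots> \<le> (real d + 1) ^ d * exp t"
    by (intro mult_right_mono power_mono) auto
  finally show ?thesis .
qed (use assms in simp)

lemma abs_poly_le_one_plus_square_power:
  fixes q :: "real poly" and x :: real
  shows "\<bar>poly q x\<bar> \<le> (\<Sum>i\<le>degree q. \<bar>coeff q i\<bar>) * (1 + x\<^sup>2) ^ degree q"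
proof -
  have "\<bar>poly q x\<bar> \<le> (\<Sum>i\<le>degree q. \<bar>coeff q i\<bar> * \<bar>x\<bar> ^ i)"
    unfolding poly_altdef by (rule order_trans[OF sum_abs]) (simp add: abs_mult power_abs)
  also have "\<dots> \<le> (\<Sum>i\<le>degree q. \<bar>coeff q i\<bar> * (1 + x\<^sup>2) ^ degree q)"
  proof (intro sum_mono mult_left_mono)
    fix i assume "i \<in> {..degree q}"
    have "0 \<le> (\<bar>x\<bar> - 1/2)\<^sup>2" by simp
    then have "\<bar>x\<bar> \<le> 1 + x\<^sup>2"
      by (simp add: power2_eq_square algebra_simps abs_mult_self_eq)
    then have "\<bar>x\<bar> ^ i \<le> (1 + x\<^sup>2) ^ i" by (intro power_mono) auto
    also have "\<dots> \<le> (1 + x\<^sup>2) ^ degree q" using \<open>i \<in> {..degree q}\<close> by (intro power_increasing) auto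
    finally show "\<bar>x\<bar> ^ i \<le> (1 + x\<^sup>2) ^ degree q" .
  qed auto
  finally show ?thesis by (simp add: sum_distrib_right)
qed

lemma poly_gaussian_bounded:
  assumes c: "0 < (c::real)"
  shows "\<exists>B. \<forall>x. \<bar>poly q x\<bar> * exp (- c * x\<^sup>2) \<le> B"
proof -
  define d where "d = degree q"
  define K where "K = (\<Sum>i\<le>d. \<bar>coeff q i\<bar>)"
  have K0: "0 \<le> K" by (simp add: K_def sum_nonneg)
  show ?thesis
  proof (intro exI allI)
    fix x :: real
    have "\<bar>poly q x\<bar> \<le> K * (1 + x\<^sup>2) ^ d"
      unfolding K_def d_def by (rule abs_poly_le_one_plus_square_power)
    also have "\<dots> \<le> K * ((real d + 1) ^ d * exp (c * (1 + x\<^sup>2)) / c ^ d)"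
    proof (intro mult_left_mono K0)
      have "(c * (1 + x\<^sup>2)) ^ d \<le> (real d + 1) ^ d * exp (c * (1 + x\<^sup>2))"
        using c by (intro pow_le_exp) auto
      then show "(1 + x\<^sup>2) ^ d \<le> (real d + 1) ^ d * exp (c * (1 + x\<^sup>2)) / c ^ d"
        using c by (simp add: pos_le_divide_eq power_mult_distrib mult.commute)
    qed
    finally have "\<bar>poly q x\<bar> * exp (- c * x\<^sup>2)
        \<le> K * ((real d + 1) ^ d * exp (c * (1 + x\<^sup>2)) / c ^ d) * exp (- c * x\<^sup>2)"
      by (rule mult_right_mono) simp
    also have "\<dots> = K * (real d + 1) ^ d / c ^ d * (exp (c * (1 + x\<^sup>2)) * exp (- c * x\<^sup>2))"
      by (simp add: field_simps)
    also have "exp (c * (1 + x\<^sup>2)) * exp (- c * x\<^sup>2) = exp c"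
      by (simp add: exp_add[symmetric] algebra_simps)
    finally show "\<bar>poly q x\<bar> * exp (- c * x\<^sup>2) \<le> K * (real d + 1) ^ d / c ^ d * exp c" .
  qed
qed

text \<open>The k-th derivative of exp(-c x^2) is gaussian_poly c k times exp(-c x^2).\<close>
definition gaussian_poly :: "real \<Rightarrow> nat \<Rightarrow> real poly" where
  "gaussian_poly c k = ((\<lambda>p. pderiv p + [:0, -2 * c:] * p) ^^ k) 1"

lemma gaussian_poly_Suc:
  "gaussian_poly c (Suc k) = pderiv (gaussian_poly c k) + [:0, -2 * c:] * gaussian_poly c k"
  by (simp add: gaussian_poly_def)

lemma poly_times_gaussian_has_deriv:
  "((\<lambda>x. poly p x * exp (- c * x\<^sup>2)) has_real_derivative
     poly (pderiv p + [:0, -2 * c:] * p) x * exp (- c * x\<^sup>2)) (at x)"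
  by (auto intro!: derivative_eq_intros simp: algebra_simps)

lemma gaussian_higher_deriv:
  "(deriv ^^ k) (\<lambda>x. exp (- c * x\<^sup>2)) = (\<lambda>x. poly (gaussian_poly c k) x * exp (- c * x\<^sup>2))"
proof (induction k)
  case (Suc k)
  have "deriv (\<lambda>x. poly (gaussian_poly c k) x * exp (- c * x\<^sup>2)) x =
        poly (gaussian_poly c (Suc k)) x * exp (- c * x\<^sup>2)" for x
    unfolding gaussian_poly_Suc by (rule DERIV_imp_deriv[OF poly_times_gaussian_has_deriv])
  then show ?case using Suc by auto
qed (simp add: gaussian_poly_def)

lemma gaussian_schwartz:
  assumes "0 < c"
  shows "(\<lambda>x. exp (- c * x\<^sup>2)) \<in> schwartz"
proof (rule schwartzI)
  fix k x
  show "((deriv ^^ k) (\<lambda>x. exp (- c * x\<^sup>2)) has_real_derivative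
          (deriv ^^ Suc k) (\<lambda>x. exp (- c * x\<^sup>2)) x) (at x)"
    unfolding gaussian_higher_deriv gaussian_poly_Suc by (rule poly_times_gaussian_has_deriv)
next
  fix k m
  obtain B where B: "\<forall>x. \<bar>poly (monom 1 m * gaussian_poly c k) x\<bar> * exp (- c * x\<^sup>2) \<le> B"
    using poly_gaussian_bounded[OF assms] by blast
  show "\<exists>B. \<forall>x. \<bar>x\<bar> ^ m * \<bar>(deriv ^^ k) (\<lambda>x. exp (- c * x\<^sup>2)) x\<bar> \<le> B"
    unfolding gaussian_higher_deriv using B
    by (intro exI[of _ B]) (auto simp: poly_monom abs_mult power_abs mult.assoc)
qed

section \<open>The primitive of an integrable function\<close>

definition primitive :: "(real \<Rightarrow> real) \<Rightarrow> real \<Rightarrow> real" where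
  "primitive F x = (\<integral>t. indicator {..x} t * F t \<partial>lborel)"

lemma integrable_indicator_mult:
  "integrable lborel (F::real \<Rightarrow> real) \<Longrightarrow> A \<in> sets borel \<Longrightarrow> integrable lborel (\<lambda>t. indicator A t * F t)"
  using integrable_mult_indicator[of A lborel F] by simp

lemma primitive_tendsto_sequentially:
  assumes F: "integrable lborel F"
    and lim: "\<And>t. t \<noteq> x \<Longrightarrow> (\<lambda>k. indicator {..X k} t * F t) \<longlonglongrightarrow> G t"
    and [measurable]: "G \<in> borel_measurable borel"
  shows "(\<lambda>k. primitive F (X k)) \<longlonglongrightarrow> (\<integral>t. G t \<partial>lborel)"
  unfolding primitive_def
proof (rule integral_dominated_convergence[where w="\<lambda>t. \<bar>F t\<bar>"])
  show "integrable lborel (\<lambda>t. \<bar>F t\<bar>)" using F by auto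
  show "(\<lambda>t. indicator {..X i} t * F t) \<in> borel_measurable lborel" for i using F by measurable
  show "AE t in lborel. norm (indicator {..X i} t * F t) \<le> \<bar>F t\<bar>" for i
    by (auto simp: indicator_def)
  show "AE t in lborel. (\<lambda>i. indicator {..X i} t * F t) \<longlonglongrightarrow> G t"
    using AE_lborel_singleton[of x] by eventually_elim (rule lim)
qed simp

lemma primitive_isCont:
  assumes F: "integrable lborel F"
  shows "isCont (primitive F) x"
proof (rule continuous_at_sequentiallyI)
  fix X assume X: "X \<longlonglongrightarrow> x"
  have "(\<lambda>k. indicator {..X k} t * F t) \<longlonglongrightarrow> indicator {..x} t * F t" if "t \<noteq> x" for t
  proof (cases "t < x")
    case True
    have "eventually (\<lambda>k. t < X k) sequentially" using order_tendstoD(1)[OF X True] .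
    then show ?thesis
      by (rule tendsto_eventually[OF eventually_mono]) (use True in auto)
  next
    case False
    then have "x < t" using that by auto
    have "eventually (\<lambda>k. X k < t) sequentially" using order_tendstoD(2)[OF X \<open>x < t\<close>] .
    then show ?thesis
      by (rule tendsto_eventually[OF eventually_mono]) (use \<open>x < t\<close> in auto)
  qed
  with F show "(\<lambda>k. primitive F (X k)) \<longlonglongrightarrow> primitive F x"
    unfolding primitive_def[of F x] by (intro primitive_tendsto_sequentially) auto
qed

lemma primitive_continuous_on: "integrable lborel F \<Longrightarrow> continuous_on UNIV (primitive F)"
  by (simp add: primitive_isCont continuous_at_imp_continuous_on)

lemma primitive_tendsto_at_bot:
  assumes F: "integrable lborel F"
  shows "(primitive F \<longlongrightarrow> 0) at_bot"
proof (rule tendsto_at_botI_sequentially)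
  fix X :: "nat \<Rightarrow> real" assume X: "filterlim X at_bot sequentially"
  have "(\<lambda>k. indicator {..X k} t * F t) \<longlonglongrightarrow> 0" for t
  proof -
    have "eventually (\<lambda>k. X k < t) sequentially" using X by (simp add: filterlim_at_bot_dense)
    then show ?thesis by (rule tendsto_eventually[OF eventually_mono]) auto
  qed
  then show "(\<lambda>k. primitive F (X k)) \<longlonglongrightarrow> 0"
    using primitive_tendsto_sequentially[OF F, where X=X and x=0 and G="\<lambda>_. 0"] by simp
qed

lemma primitive_tendsto_at_top:
  assumes F: "integrable lborel F"
  shows "(primitive F \<longlongrightarrow> (\<integral>t. F t \<partial>lborel)) at_top"
proof (rule tendsto_at_topI_sequentially)
  fix X :: "nat \<Rightarrow> real" assume X: "filterlim X at_top sequentially"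
  have "(\<lambda>k. indicator {..X k} t * F t) \<longlonglongrightarrow> F t" for t
  proof -
    have "eventually (\<lambda>k. t < X k) sequentially" using X by (simp add: filterlim_at_top_dense)
    then show ?thesis by (rule tendsto_eventually[OF eventually_mono]) auto
  qed
  then show "(\<lambda>k. primitive F (X k)) \<longlonglongrightarrow> (\<integral>t. F t \<partial>lborel)"
    using F by (intro primitive_tendsto_sequentially[OF F, where X=X and x=0]) auto
qed

lemma primitive_in_Bc: "integrable lborel F \<Longrightarrow> primitive F \<in> Bc"
  unfolding Bc_def using primitive_continuous_on primitive_tendsto_at_bot primitive_tendsto_at_top
  by blast

lemma primitive_diff:
  assumes F: "integrable lborel F" and "a \<le> b"
  shows "primitive F b - primitive F a = (\<integral>t. indicator {a<..b} t * F t \<partial>lborel)"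
proof -
  have "primitive F b - primitive F a
        = (\<integral>t. indicator {..b} t * F t - indicator {..a} t * F t \<partial>lborel)"
    unfolding primitive_def using F
    by (subst Bochner_Integration.integral_diff) (auto intro: integrable_indicator_mult)
  also have "\<dots> = (\<integral>t. indicator {a<..b} t * F t \<partial>lborel)"
    using \<open>a \<le> b\<close> by (intro Bochner_Integration.integral_cong) (auto simp: indicator_def)
  finally show ?thesis .
qed

lemma primitive_has_deriv:
  assumes F: "integrable lborel F" and c: "continuous_on UNIV F"
  shows "(primitive F has_real_derivative F x) (at x)"
proof -
  define a where "a = x - 1"
  define b where "b = x + 1"
  have eq: "primitive F y = primitive F a + (LBINT t=a..y. F t)" if "y \<in> {a..b}" for y
  proof -
    have "a \<le> y" using that by auto
    then have "(LBINT t=a..y. F t) = (\<integral>t. indicator {a<..y} t * F t \<partial>lborel)"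
      by (simp add: interval_integral_Ioc set_lebesgue_integral_def)
    then show ?thesis using primitive_diff[OF F \<open>a \<le> y\<close>] by simp
  qed
  have "((\<lambda>y. LBINT t=a..y. F t) has_vector_derivative F x) (at x within {a..b})"
    by (rule interval_integral_FTC2) (use c in \<open>auto simp: a_def b_def intro: continuous_on_subset\<close>)
  then have "((\<lambda>y. primitive F a + (LBINT t=a..y. F t)) has_vector_derivative F x) (at x within {a..b})"
    by (auto intro!: derivative_eq_intros)
  then have "(primitive F has_vector_derivative F x) (at x within {a..b})"
    by (intro has_vector_derivative_transform[OF _ eq]) (auto simp: a_def b_def)
  moreover have "at x within {a..b} = at x" by (rule at_within_Icc_at) (auto simp: a_def b_def)
  ultimately show ?thesis by (simp add: has_real_derivative_iff_has_vector_derivative)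
qed

text \<open>Integration by parts against a Schwartz function, via Fubini on the region y <= x.\<close>
lemma integral_primitive_by_parts:
  assumes F: "integrable lborel F" and \<phi>: "\<phi> \<in> schwartz"
  shows "(\<integral>x. primitive F x * (deriv ^^ Suc n) \<phi> x \<partial>lborel) = - (\<integral>y. F y * (deriv ^^ n) \<phi> y \<partial>lborel)"
proof -
  let ?p = "(deriv ^^ n) \<phi>" and ?q = "(deriv ^^ Suc n) \<phi>"
  have qi: "integrable lborel ?q" by (rule schwartz_integrable[OF \<phi>])
  have [measurable]: "F \<in> borel_measurable borel" using F by auto
  have [measurable]: "?q \<in> borel_measurable borel" by (rule schwartz_measurable[OF \<phi>])
  define f where "f y x = (if y \<le> x then F y * ?q x else 0)" for y x
  have fm[measurable]: "(\<lambda>(y, x). f y x) \<in> borel_measurable (lborel \<Otimes>\<^sub>M lborel)"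
    unfolding f_def by measurable
  have "integrable (lborel \<Otimes>\<^sub>M lborel) (\<lambda>(y, x). \<bar>F y\<bar> * \<bar>?q x\<bar>)"
  proof (rule lborel_pair.Fubini_integrable)
    show "(\<lambda>(y, x). \<bar>F y\<bar> * \<bar>?q x\<bar>) \<in> borel_measurable (lborel \<Otimes>\<^sub>M lborel)" by measurable
    have "(\<lambda>y. \<integral>x. norm (case (y, x) of (y, x) \<Rightarrow> \<bar>F y\<bar> * \<bar>?q x\<bar>) \<partial>lborel)
          = (\<lambda>y. \<bar>F y\<bar> * (\<integral>x. \<bar>?q x\<bar> \<partial>lborel))"
      by (simp add: abs_mult)
    then show "integrable lborel (\<lambda>y. \<integral>x. norm (case (y, x) of (y, x) \<Rightarrow> \<bar>F y\<bar> * \<bar>?q x\<bar>) \<partial>lborel)"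
      using F by simp
    show "AE y in lborel. integrable lborel (\<lambda>x. case (y, x) of (y, x) \<Rightarrow> \<bar>F y\<bar> * \<bar>?q x\<bar>)"
      using qi by auto
  qed
  then have fint: "integrable (lborel \<Otimes>\<^sub>M lborel) (\<lambda>(y, x). f y x)"
    by (rule Bochner_Integration.integrable_bound[OF _ fm]) (auto simp: f_def abs_mult)
  have inner_y: "(\<integral>y. f y x \<partial>lborel) = primitive F x * ?q x" for x
  proof -
    have "(\<integral>y. f y x \<partial>lborel) = (\<integral>y. indicator {..x} y * F y * ?q x \<partial>lborel)"
      by (rule Bochner_Integration.integral_cong) (auto simp: f_def indicator_def)
    then show ?thesis unfolding primitive_def by simp
  qed
  have inner_x: "(\<integral>x. f y x \<partial>lborel) = - F y * ?p y" for y
  proof -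
    have "(\<integral>x. f y x \<partial>lborel) = (\<integral>x. F y * (indicator {y..} x * ?q x) \<partial>lborel)"
      by (rule Bochner_Integration.integral_cong) (auto simp: f_def indicator_def)
    then show ?thesis using schwartz_tail_integral[OF \<phi>] by simp
  qed
  show ?thesis
    using lborel_pair.Fubini_integral[OF fint] unfolding inner_y inner_x by simp
qed

lemma distD_primitive:
  assumes "integrable lborel F"
  shows "distD (Suc n) (primitive F) = distD n F"
  unfolding distD_def using integral_primitive_by_parts[OF assms] by auto

section \<open>Difference operators on test functions\<close>

text \<open>The backward difference and the window integral (the integral of phi over ]y-h, y]);
  the window integral is again a Schwartz function whose derivative is the backward
  difference, so m-fold backward differences are m-th derivatives of Schwartz functions.\<close>
definition back_diff :: "real \<Rightarrow> (real \<Rightarrow> real) \<Rightarrow> real \<Rightarrow> real" where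
  "back_diff h \<phi> = (\<lambda>y. \<phi> y - \<phi> (y - h))"

definition window :: "real \<Rightarrow> (real \<Rightarrow> real) \<Rightarrow> real \<Rightarrow> real" where
  "window h \<phi> = (\<lambda>y. primitive \<phi> y - primitive \<phi> (y - h))"

lemma back_diff_schwartz: "\<phi> \<in> schwartz \<Longrightarrow> back_diff h \<phi> \<in> schwartz"
  unfolding back_diff_def using schwartz_lincomb[OF _ schwartz_translate[of \<phi> h], where a=1 and b="-1"] by simp

lemma back_diff_higher_deriv:
  "\<phi> \<in> schwartz \<Longrightarrow> (deriv ^^ k) (back_diff h \<phi>) = back_diff h ((deriv ^^ k) \<phi>)"
  unfolding back_diff_def
  using schwartz_lincomb_deriv[OF _ schwartz_translate[of \<phi> h], where a=1 and b="-1" and k=k]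
  by (simp add: schwartz_translate_deriv)

lemma window_has_deriv:
  assumes "\<phi> \<in> schwartz"
  shows "(window h \<phi> has_real_derivative back_diff h \<phi> y) (at y)"
proof -
  have i: "integrable lborel \<phi>" and c: "continuous_on UNIV \<phi>"
    using schwartz_integrable[OF assms, of 0] schwartz_continuous_on[OF assms, of 0] by auto
  have "((\<lambda>y. primitive \<phi> y - primitive \<phi> (y - h)) has_real_derivative \<phi> y - \<phi> (y - h) * 1) (at y)"
    by (intro DERIV_diff primitive_has_deriv[OF i c] DERIV_chain2[OF primitive_has_deriv[OF i c]])
       (auto intro!: derivative_eq_intros)
  then show ?thesis by (simp add: window_def back_diff_def)
qed

lemma window_higher_deriv:
  assumes "\<phi> \<in> schwartz"
  shows "(deriv ^^ Suc k) (window h \<phi>) = (deriv ^^ k) (back_diff h \<phi>)"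
proof -
  have "deriv (window h \<phi>) = back_diff h \<phi>"
    using window_has_deriv[OF assms] DERIV_imp_deriv by blast
  then show ?thesis by (simp add: funpow_Suc_right del: funpow.simps)
qed

lemma window_weighted_bound:
  assumes \<phi>: "\<phi> \<in> schwartz" and h: "0 < h"
  shows "\<exists>B. \<forall>x. \<bar>x\<bar> ^ m * \<bar>window h \<phi> x\<bar> \<le> B"
proof -
  obtain B0 where B0: "\<forall>y. \<bar>y\<bar> ^ 0 * \<bar>(deriv ^^ 0) \<phi> y\<bar> \<le> B0"
    using schwartz_weighted_bound[OF \<phi>] by blast
  obtain Bm where Bm: "\<forall>y. \<bar>y\<bar> ^ m * \<bar>(deriv ^^ 0) \<phi> y\<bar> \<le> Bm"
    using schwartz_weighted_bound[OF \<phi>] by blast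
  have i: "integrable lborel \<phi>" using schwartz_integrable[OF \<phi>, of 0] by simp
  define K where "K = 2 ^ m * (Bm + h ^ m * B0)"
  have "\<bar>x\<bar> ^ m * \<bar>window h \<phi> x\<bar> \<le> K * h" for x
  proof -
    let ?I = "{x - h<..x}"
    have "\<bar>x\<bar> ^ m * \<bar>window h \<phi> x\<bar> = \<bar>\<integral>t. \<bar>x\<bar> ^ m * (indicator ?I t * \<phi> t) \<partial>lborel\<bar>"
      unfolding window_def using primitive_diff[OF i, of "x - h" x] h by (simp add: abs_mult)
    also have "\<dots> \<le> (\<integral>t. K * indicator ?I t \<partial>lborel)"
    proof (rule integral_abs_bound_integral)
      show "integrable lborel (\<lambda>t. \<bar>x\<bar> ^ m * (indicator ?I t * \<phi> t))"
        using integrable_indicator_mult[OF i] by auto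
      show "integrable lborel (\<lambda>t. K * indicator ?I t)"
        using h by (auto intro!: integrable_real_indicator)
      fix t :: real
      have "\<bar>x\<bar> ^ m * \<bar>\<phi> t\<bar> \<le> K" if "t \<in> ?I"
        unfolding K_def by (rule weighted_bound_translate) (use B0 Bm h that in auto)
      then show "\<bar>\<bar>x\<bar> ^ m * (indicator ?I t * \<phi> t)\<bar> \<le> K * indicator ?I t"
        by (auto simp: indicator_def abs_mult)
    qed
    also have "\<dots> = K * h" using h by simp
    finally show ?thesis .
  qed
  then show ?thesis by blast
qed

lemma window_schwartz:
  assumes \<phi>: "\<phi> \<in> schwartz" and h: "0 < h"
  shows "window h \<phi> \<in> schwartz"
proof (rule schwartzI)
  fix k x
  show "((deriv ^^ k) (window h \<phi>) has_real_derivative (deriv ^^ Suc k) (window h \<phi>) x) (at x)"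
  proof (cases k)
    case 0 then show ?thesis
      using window_has_deriv[OF \<phi>] window_higher_deriv[OF \<phi>, of 0] by simp
  next
    case (Suc j)
    show ?thesis
      unfolding Suc window_higher_deriv[OF \<phi>] by (rule schwartz_has_deriv[OF back_diff_schwartz[OF \<phi>]])
  qed
next
  fix k m
  show "\<exists>B. \<forall>x. \<bar>x\<bar> ^ m * \<bar>(deriv ^^ k) (window h \<phi>) x\<bar> \<le> B"
  proof (cases k)
    case 0 then show ?thesis using window_weighted_bound[OF \<phi> h] by simp
  next
    case (Suc j) show ?thesis
      unfolding Suc window_higher_deriv[OF \<phi>] by (rule schwartz_weighted_bound[OF back_diff_schwartz[OF \<phi>]])
  qed
qed

lemma window_iter_schwartz: "\<phi> \<in> schwartz \<Longrightarrow> 0 < h \<Longrightarrow> (window h ^^ m) \<phi> \<in> schwartz"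
  by (induction m) (auto intro: window_schwartz)

lemma back_diff_iter_schwartz: "\<phi> \<in> schwartz \<Longrightarrow> (back_diff h ^^ m) \<phi> \<in> schwartz"
  by (induction m) (auto intro: back_diff_schwartz)

lemma higher_deriv_window_iter:
  assumes "\<phi> \<in> schwartz" "0 < h"
  shows "(deriv ^^ m) ((window h ^^ m) \<phi>) = (back_diff h ^^ m) \<phi>"
proof (induction m)
  case (Suc m)
  have s: "(window h ^^ m) \<phi> \<in> schwartz" using window_iter_schwartz assms by blast
  have "(deriv ^^ Suc m) ((window h ^^ Suc m) \<phi>) = (deriv ^^ m) (back_diff h ((window h ^^ m) \<phi>))"
    using window_higher_deriv[OF s] by simp
  also have "\<dots> = back_diff h ((deriv ^^ m) ((window h ^^ m) \<phi>))"
    by (rule back_diff_higher_deriv[OF s])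
  finally show ?case using Suc by simp
qed simp

section \<open>Uniqueness of bounded primitives\<close>

definition fwd_diff :: "real \<Rightarrow> (real \<Rightarrow> real) \<Rightarrow> real \<Rightarrow> real" where
  "fwd_diff h u = (\<lambda>a. u a - u (a + h))"

text \<open>If the second difference of a bounded w vanishes, the first difference d is h-periodic,
  so w(a) - w(a + n h) = n d(a) grows linearly unless d(a) = 0.\<close>
lemma bounded_second_diff_zero:
  assumes B: "\<And>a. \<bar>w a\<bar> \<le> B" and Z: "\<And>a. fwd_diff h (fwd_diff h w) a = 0"
  shows "fwd_diff h w a = 0"
proof -
  define d where "d = fwd_diff h w"
  have d_periodic: "d (a + real n * h) = d a" for n
  proof (induction n)
    case (Suc n) then show ?case
      using Z[of "a + real n * h"] by (simp add: d_def fwd_diff_def algebra_simps)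
  qed simp
  have w_linear: "w a - w (a + real n * h) = real n * d a" for n
  proof (induction n)
    case (Suc n)
    have "w a - w (a + real (Suc n) * h) = (w a - w (a + real n * h)) + d (a + real n * h)"
      by (simp add: d_def fwd_diff_def algebra_simps)
    then show ?case using Suc d_periodic by (simp add: algebra_simps)
  qed simp
  show ?thesis
  proof (rule ccontr)
    assume "fwd_diff h w a \<noteq> 0"
    then have pos: "0 < \<bar>d a\<bar>" by (simp add: d_def)
    obtain n :: nat where n: "2 * B / \<bar>d a\<bar> < real n" using reals_Archimedean2 by blast
    have "real n * \<bar>d a\<bar> = \<bar>w a - w (a + real n * h)\<bar>" using w_linear[of n] by (simp add: abs_mult)
    also have "\<dots> \<le> 2 * B" using B[of a] B[of "a + real n * h"] by linarith
    finally have "real n \<le> 2 * B / \<bar>d a\<bar>" using pos by (simp add: field_simps)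
    then show False using n by linarith
  qed
qed

lemma bounded_higher_diff_zero:
  assumes "\<And>a. \<bar>w a\<bar> \<le> B" and "\<And>a. (fwd_diff h ^^ m) w a = 0"
  shows "fwd_diff h w a = 0"
  using assms
proof (induction m arbitrary: w B a)
  case 0 then show ?case by (simp add: fwd_diff_def)
next
  case (Suc m)
  have "\<bar>fwd_diff h w b\<bar> \<le> 2 * B" for b
    using Suc.prems(1)[of b] Suc.prems(1)[of "b + h"] by (simp add: fwd_diff_def)
  moreover have "(fwd_diff h ^^ m) (fwd_diff h w) b = 0" for b
    using Suc.prems(2)[of b] by (simp add: funpow_Suc_right del: funpow.simps)
  ultimately have "fwd_diff h (fwd_diff h w) b = 0" for b using Suc.IH by blast
  then show ?case using bounded_second_diff_zero Suc.prems(1) by blast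
qed

definition pairing_translate :: "(real \<Rightarrow> real) \<Rightarrow> (real \<Rightarrow> real) \<Rightarrow> real \<Rightarrow> real" where
  "pairing_translate H \<rho> a = (\<integral>y. H y * \<rho> (y - a) \<partial>lborel)"

lemma pairing_translate_shift: "pairing_translate H \<rho> a = (\<integral>s. H (a + s) * \<rho> s \<partial>lborel)"
  unfolding pairing_translate_def
  using lborel_integral_real_affine[of 1 "\<lambda>y. H y * \<rho> (y - a)" a] by simp

lemma pairing_translate_back_diff_iter:
  assumes Hm: "H \<in> borel_measurable borel" and HB: "\<And>x. \<bar>H x\<bar> \<le> B"
    and \<psi>: "\<psi> \<in> schwartz"
  shows "pairing_translate H ((back_diff h ^^ j) \<psi>) = (fwd_diff h ^^ j) (pairing_translate H \<psi>)"
proof (induction j)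
  case (Suc j)
  let ?\<psi> = "(back_diff h ^^ j) \<psi>"
  have s: "?\<psi> \<in> schwartz" by (rule back_diff_iter_schwartz[OF \<psi>])
  have int: "integrable lborel (\<lambda>y. H y * ?\<psi> (y - a))" for a
    using schwartz_integrable_mult_bounded[OF schwartz_translate[OF s, of a] Hm HB, where k=0] by simp
  have "pairing_translate H (back_diff h ?\<psi>) a = fwd_diff h (pairing_translate H ?\<psi>) a" for a
  proof -
    have "pairing_translate H (back_diff h ?\<psi>) a
          = (\<integral>y. H y * ?\<psi> (y - a) - H y * ?\<psi> (y - (a + h)) \<partial>lborel)"
      unfolding pairing_translate_def back_diff_def by (simp add: algebra_simps diff_diff_eq)
    also have "\<dots> = pairing_translate H ?\<psi> a - pairing_translate H ?\<psi> (a + h)"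
      unfolding pairing_translate_def by (rule Bochner_Integration.integral_diff) (use int in auto)
    finally show ?thesis by (simp add: fwd_diff_def)
  qed
  then show ?case using Suc by auto
qed simp

text \<open>If D^m H = 0 then, for every Schwartz rho, the pairings of H with translates of rho have
  vanishing m-th differences: (fwd_diff 1)^m of the pairing is the pairing with
  (back_diff 1)^m rho, the m-th derivative of the Schwartz function (window 1)^m rho.\<close>
lemma pairing_translate_higher_diff_zero:
  assumes [measurable]: "H \<in> borel_measurable borel" and HB: "\<And>x. \<bar>H x\<bar> \<le> B"
    and Z: "\<And>\<phi>. \<phi> \<in> schwartz \<Longrightarrow> (\<integral>x. H x * (deriv ^^ m) \<phi> x \<partial>lborel) = 0"
    and \<rho>: "\<rho> \<in> schwartz"
  shows "(fwd_diff 1 ^^ m) (pairing_translate H \<rho>) b = 0"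
proof -
  have s: "(window 1 ^^ m) \<rho> \<in> schwartz" by (rule window_iter_schwartz[OF \<rho>]) simp
  have "(fwd_diff 1 ^^ m) (pairing_translate H \<rho>) b = pairing_translate H ((back_diff 1 ^^ m) \<rho>) b"
    using pairing_translate_back_diff_iter[OF _ HB \<rho>] by simp
  also have "\<dots> = (\<integral>y. H y * (deriv ^^ m) (\<lambda>y. (window 1 ^^ m) \<rho> (y - b)) y \<partial>lborel)"
    unfolding pairing_translate_def
    by (simp add: higher_deriv_window_iter[OF \<rho>] schwartz_translate_deriv[OF s])
  also have "\<dots> = 0" by (rule Z[OF schwartz_translate[OF s]])
  finally show ?thesis .
qed

lemma pairing_translate_bounded:
  assumes [measurable]: "H \<in> borel_measurable borel" and HB: "\<And>x. \<bar>H x\<bar> \<le> B"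
    and \<rho>: "\<rho> \<in> schwartz"
  shows "\<bar>pairing_translate H \<rho> b\<bar> \<le> B * (\<integral>s. \<bar>\<rho> s\<bar> \<partial>lborel)"
proof -
  have "\<bar>pairing_translate H \<rho> b\<bar> \<le> (\<integral>s. B * \<bar>\<rho> s\<bar> \<partial>lborel)"
    unfolding pairing_translate_shift
  proof (rule integral_abs_bound_integral)
    show "integrable lborel (\<lambda>s. H (b + s) * \<rho> s)"
      using schwartz_integrable_mult_bounded[OF \<rho>, of "\<lambda>s. H (b + s)" B 0] HB by simp
    show "integrable lborel (\<lambda>s. B * \<bar>\<rho> s\<bar>)"
      using schwartz_integrable[OF \<rho>, of 0] by simp
    show "\<bar>H (b + s) * \<rho> s\<bar> \<le> B * \<bar>\<rho> s\<bar>" for s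
      using HB[of "b + s"] by (simp add: abs_mult mult_right_mono)
  qed
  then show ?thesis by simp
qed

lemma pairing_translate_tendsto_at_bot:
  assumes [measurable]: "H \<in> borel_measurable borel" and HB: "\<And>x. \<bar>H x\<bar> \<le> B"
    and Hbot: "(H \<longlongrightarrow> 0) at_bot" and \<rho>: "\<rho> \<in> schwartz"
  shows "(\<lambda>n. pairing_translate H \<rho> (b - real n)) \<longlonglongrightarrow> 0"
proof -
  have [measurable]: "\<rho> \<in> borel_measurable borel" using schwartz_measurable[OF \<rho>, of 0] by simp
  have "(\<lambda>n. \<integral>s. H (b - real n + s) * \<rho> s \<partial>lborel) \<longlonglongrightarrow> (\<integral>s. 0 * \<rho> s \<partial>lborel)"
  proof (rule integral_dominated_convergence[where w="\<lambda>s. B * \<bar>\<rho> s\<bar>"])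
    show "integrable lborel (\<lambda>s. B * \<bar>\<rho> s\<bar>)" using schwartz_integrable[OF \<rho>, of 0] by simp
    show "AE s in lborel. norm (H (b - real i + s) * \<rho> s) \<le> B * \<bar>\<rho> s\<bar>" for i
      using HB by (auto simp: abs_mult mult_right_mono)
    show "AE s in lborel. (\<lambda>i. H (b - real i + s) * \<rho> s) \<longlonglongrightarrow> 0 * \<rho> s"
    proof (rule AE_I2)
      fix s
      have "filterlim (\<lambda>i. - (b + s) + real i) at_top sequentially"
        by (rule filterlim_tendsto_add_at_top[OF tendsto_const filterlim_real_sequentially])
      then have "filterlim (\<lambda>i. b + s - real i) at_bot sequentially"
        by (simp add: filterlim_uminus_at_top add.commute)
      then have "(\<lambda>i. H (b - real i + s)) \<longlonglongrightarrow> 0"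
        using filterlim_compose[OF Hbot] by (simp add: algebra_simps)
      then show "(\<lambda>i. H (b - real i + s) * \<rho> s) \<longlonglongrightarrow> 0 * \<rho> s" by (intro tendsto_intros)
    qed
  qed auto
  then show ?thesis by (simp add: pairing_translate_shift)
qed

text \<open>If D^m H = 0, the pairings of H with translates of a Schwartz function vanish: they are
  bounded with vanishing m-th differences, hence 1-periodic, and they tend to 0 at minus
  infinity.\<close>
lemma pairing_translate_zero:
  assumes Hm: "H \<in> borel_measurable borel" and HB: "\<And>x. \<bar>H x\<bar> \<le> B"
    and Hbot: "(H \<longlongrightarrow> 0) at_bot"
    and Z: "\<And>\<phi>. \<phi> \<in> schwartz \<Longrightarrow> (\<integral>x. H x * (deriv ^^ m) \<phi> x \<partial>lborel) = 0"
    and \<rho>: "\<rho> \<in> schwartz"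
  shows "pairing_translate H \<rho> b = 0"
proof -
  let ?u = "pairing_translate H \<rho>"
  have "fwd_diff 1 ?u a = 0" for a
    by (rule bounded_higher_diff_zero[OF pairing_translate_bounded[OF Hm HB \<rho>]])
       (rule pairing_translate_higher_diff_zero[OF Hm HB Z \<rho>])
  then have periodic: "?u a = ?u (a + 1)" for a by (simp add: fwd_diff_def)
  have "?u b = ?u (b - real n)" for n
  proof (induction n)
    case (Suc n) then show ?case using periodic[of "b - real (Suc n)"] by simp
  qed simp
  then show ?thesis
    using pairing_translate_tendsto_at_bot[OF Hm HB Hbot \<rho>, of b] by (simp add: LIMSEQ_const_iff)
qed

lemma gaussian_integral_pos: "0 < (\<integral>r. exp (- r\<^sup>2) \<partial>(lborel :: real measure))"
proof -
  have gint: "integrable lborel (\<lambda>r::real. exp (- r\<^sup>2))"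
    using schwartz_integrable[OF gaussian_schwartz[of 1], of 0] by simp
  have "sqrt pi / 2 = (\<integral>r. indicator {0..} r * exp (- r\<^sup>2) \<partial>lborel)"
    using has_bochner_integral_integral_eq[OF gaussian_moment_0] by simp
  also have "\<dots> \<le> (\<integral>r. exp (- r\<^sup>2) \<partial>lborel)"
  proof (rule integral_mono)
    show "integrable lborel (\<lambda>r::real. indicator {0..} r * exp (- r\<^sup>2))"
      using integrable_indicator_mult[OF gint, of "{0..}"] by simp
    show "indicator {0..} r * exp (- r\<^sup>2) \<le> exp (- r\<^sup>2)" for r :: real
      by (simp add: indicator_def)
  qed (rule gint)
  finally have "sqrt pi / 2 \<le> (\<integral>r. exp (- r\<^sup>2) \<partial>(lborel :: real measure))" .
  moreover have "0 < sqrt pi / 2" by simp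
  ultimately show ?thesis by linarith
qed

lemma gaussian_average_rescale:
  fixes H :: "real \<Rightarrow> real" and k :: nat
  shows "(\<integral>s. H (x0 + s) * exp (- (real (Suc k))\<^sup>2 * s\<^sup>2) \<partial>lborel)
    = (\<integral>r. H (x0 + r / real (Suc k)) * exp (- r\<^sup>2) \<partial>lborel) / real (Suc k)"
proof -
  have "exp (- (real (Suc k))\<^sup>2 * (r / real (Suc k))\<^sup>2) = exp (- r\<^sup>2)" for r
    by (simp add: power_divide)
  then show ?thesis
    using lborel_integral_real_affine[of "1 / real (Suc k)"
        "\<lambda>s. H (x0 + s) * exp (- (real (Suc k))\<^sup>2 * s\<^sup>2)" 0]
    by simp
qed

lemma rescaled_gaussian_average_tendsto:
  fixes H :: "real \<Rightarrow> real"
  assumes Hc: "continuous_on UNIV H" and HB: "\<And>x. \<bar>H x\<bar> \<le> B"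
  shows "(\<lambda>k. \<integral>r. H (x0 + r / real (Suc k)) * exp (- r\<^sup>2) \<partial>lborel)
    \<longlonglongrightarrow> H x0 * (\<integral>r. exp (- r\<^sup>2) \<partial>lborel)"
proof -
  have [measurable]: "H \<in> borel_measurable borel" using Hc by (rule borel_measurable_continuous_onI)
  have "(\<lambda>k. \<integral>r. H (x0 + r / real (Suc k)) * exp (- r\<^sup>2) \<partial>lborel)
      \<longlonglongrightarrow> (\<integral>r. H x0 * exp (- r\<^sup>2) \<partial>lborel)"
  proof (rule integral_dominated_convergence[where w="\<lambda>r. B * exp (- r\<^sup>2)"])
    show "integrable lborel (\<lambda>r::real. B * exp (- r\<^sup>2))"
      using schwartz_integrable[OF gaussian_schwartz[of 1], of 0] by simp
    show "AE r in lborel. norm (H (x0 + r / real (Suc i)) * exp (- r\<^sup>2)) \<le> B * exp (- r\<^sup>2)" for i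
      using HB by (auto simp: abs_mult mult_right_mono)
    show "AE r in lborel. (\<lambda>i. H (x0 + r / real (Suc i)) * exp (- r\<^sup>2)) \<longlonglongrightarrow> H x0 * exp (- r\<^sup>2)"
    proof (rule AE_I2)
      fix r
      have "(\<lambda>i. r / real (Suc i)) \<longlonglongrightarrow> 0"
        using tendsto_mult[OF tendsto_const[of r] LIMSEQ_inverse_real_of_nat] by (simp add: divide_inverse)
      from tendsto_add[OF tendsto_const[of x0] this]
      have "(\<lambda>i. x0 + r / real (Suc i)) \<longlonglongrightarrow> x0" by simp
      moreover have "isCont H x0" using Hc by (simp add: continuous_on_eq_continuous_at)
      ultimately have "(\<lambda>i. H (x0 + r / real (Suc i))) \<longlonglongrightarrow> H x0"
        by (rule isCont_tendsto_compose[rotated])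
      then show "(\<lambda>i. H (x0 + r / real (Suc i)) * exp (- r\<^sup>2)) \<longlonglongrightarrow> H x0 * exp (- r\<^sup>2)"
        by (intro tendsto_intros)
    qed
  qed auto
  then show ?thesis by simp
qed

lemma gaussian_averages_zero_imp_zero:
  fixes H :: "real \<Rightarrow> real"
  assumes Hc: "continuous_on UNIV H" and HB: "\<And>x. \<bar>H x\<bar> \<le> B"
    and avg: "\<And>c. 0 < c \<Longrightarrow> (\<integral>s. H (x0 + s) * exp (- c * s\<^sup>2) \<partial>lborel) = 0"
  shows "H x0 = 0"
proof -
  have "(\<integral>r. H (x0 + r / real (Suc k)) * exp (- r\<^sup>2) \<partial>lborel) = 0" for k
    using avg[of "(real (Suc k))\<^sup>2"] gaussian_average_rescale[of H x0 k] by simp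
  then have "H x0 * (\<integral>r. exp (- r\<^sup>2) \<partial>lborel) = 0"
    using rescaled_gaussian_average_tendsto[OF Hc HB, of x0] by (simp add: LIMSEQ_const_iff)
  then show ?thesis using gaussian_integral_pos by (metis less_irrefl mult_eq_0_iff)
qed

theorem distD_zero_imp_zero:
  assumes Hc: "continuous_on UNIV H" and HB: "\<And>x. \<bar>H x\<bar> \<le> B"
    and Hbot: "(H \<longlongrightarrow> 0) at_bot"
    and Z: "\<And>\<phi>. \<phi> \<in> schwartz \<Longrightarrow> (\<integral>x. H x * (deriv ^^ m) \<phi> x \<partial>lborel) = 0"
  shows "H x0 = 0"
proof (rule gaussian_averages_zero_imp_zero[OF Hc HB])
  fix c :: real assume "0 < c"
  have Hm: "H \<in> borel_measurable borel" using Hc by (rule borel_measurable_continuous_onI)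
  show "(\<integral>s. H (x0 + s) * exp (- c * s\<^sup>2) \<partial>lborel) = 0"
    using pairing_translate_zero[OF Hm HB Hbot Z gaussian_schwartz[OF \<open>0 < c\<close>], of x0]
    by (simp add: pairing_translate_shift)
qed

lemma Bc_bounded:
  assumes "F \<in> Bc"
  shows "\<exists>B. \<forall>x. \<bar>F x\<bar> \<le> B"
proof -
  from assms obtain l where c: "continuous_on UNIV F" and t: "(F \<longlongrightarrow> l) at_top"
    and b: "(F \<longlongrightarrow> 0) at_bot"
    by (auto simp: Bc_def)
  have "eventually (\<lambda>x. dist (F x) l < 1) at_top" using t by (rule tendstoD) simp
  then obtain M1 where M1: "\<And>x. x \<ge> M1 \<Longrightarrow> dist (F x) l < 1" by (auto simp: eventually_at_top_linorder)
  have "eventually (\<lambda>x. dist (F x) 0 < 1) at_bot" using b by (rule tendstoD) simp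
  then obtain M2 where M2: "\<And>x. x \<le> M2 \<Longrightarrow> dist (F x) 0 < 1" by (auto simp: eventually_at_bot_linorder)
  have "bounded (F ` {M2..M1})"
    by (rule compact_imp_bounded[OF compact_continuous_image[OF continuous_on_subset[OF c] compact_Icc]]) auto
  then obtain B where "\<forall>x\<in>{M2..M1}. \<bar>F x\<bar> \<le> B" by (auto simp: bounded_iff)
  then have B: "\<And>x. x \<in> {M2..M1} \<Longrightarrow> \<bar>F x\<bar> \<le> B" by blast
  have "\<bar>F x\<bar> \<le> \<bar>B\<bar> + \<bar>l\<bar> + 1" for x
  proof (cases "x \<ge> M1 \<or> x \<le> M2")
    case True then show ?thesis using M1[of x] M2[of x] by (auto simp: dist_real_def)
  next
    case False then show ?thesis using B[of x] by auto
  qed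
  then show ?thesis by blast
qed

lemma Bc_measurable[measurable]: "F \<in> Bc \<Longrightarrow> F \<in> borel_measurable borel"
  by (auto simp: Bc_def intro: borel_measurable_continuous_onI)

lemma Bc_diff:
  assumes "F \<in> Bc" "G \<in> Bc"
  shows "(\<lambda>x. F x - G x) \<in> Bc"
proof -
  obtain l1 where 1: "continuous_on UNIV F" "(F \<longlongrightarrow> l1) at_top" "(F \<longlongrightarrow> 0) at_bot"
    using assms(1) by (auto simp: Bc_def)
  obtain l2 where 2: "continuous_on UNIV G" "(G \<longlongrightarrow> l2) at_top" "(G \<longlongrightarrow> 0) at_bot"
    using assms(2) by (auto simp: Bc_def)
  have "((\<lambda>x. F x - G x) \<longlongrightarrow> l1 - l2) at_top" using 1(2) 2(2) by (rule tendsto_diff)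
  moreover have "((\<lambda>x. F x - G x) \<longlongrightarrow> 0 - 0) at_bot" using 1(3) 2(3) by (rule tendsto_diff)
  ultimately show ?thesis using 1(1) 2(1) unfolding Bc_def by (auto intro: continuous_on_diff)
qed

lemma distD_diff_Bc:
  assumes F: "F \<in> Bc" and G: "G \<in> Bc"
  shows "distD m (\<lambda>x. F x - G x) = (\<lambda>\<phi>. distD m F \<phi> - distD m G \<phi>)"
proof
  fix \<phi>
  show "distD m (\<lambda>x. F x - G x) \<phi> = distD m F \<phi> - distD m G \<phi>"
  proof (cases "\<phi> \<in> schwartz")
    case True
    have int: "integrable lborel (\<lambda>x. H x * (deriv ^^ m) \<phi> x)" if "H \<in> Bc" for H
      using Bc_bounded[OF that] schwartz_integrable_mult_bounded[OF True Bc_measurable[OF that]]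
      by blast
    have "(\<integral>x. (F x - G x) * (deriv ^^ m) \<phi> x \<partial>lborel)
          = (\<integral>x. F x * (deriv ^^ m) \<phi> x - G x * (deriv ^^ m) \<phi> x \<partial>lborel)"
      by (simp add: algebra_simps)
    also have "\<dots> = (\<integral>x. F x * (deriv ^^ m) \<phi> x \<partial>lborel) - (\<integral>x. G x * (deriv ^^ m) \<phi> x \<partial>lborel)"
      by (rule Bochner_Integration.integral_diff[OF int[OF F] int[OF G]])
    finally show ?thesis using True by (simp add: distD_def right_diff_distrib)
  qed (simp add: distD_def)
qed

lemma Bc_distD_unique:
  assumes F: "F \<in> Bc" and G: "G \<in> Bc" and eq: "distD m F = distD m G"
  shows "F = G"
proof -
  have H: "(\<lambda>x. F x - G x) \<in> Bc" by (rule Bc_diff[OF F G])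
  obtain B where B: "\<forall>x. \<bar>F x - G x\<bar> \<le> B" using Bc_bounded[OF H] by blast
  have "F x - G x = 0" for x
  proof (rule distD_zero_imp_zero[where m=m and H="\<lambda>x. F x - G x" and B=B])
    show "continuous_on UNIV (\<lambda>x. F x - G x)" "((\<lambda>x. F x - G x) \<longlongrightarrow> 0) at_bot"
      using H by (simp_all add: Bc_def)
    show "\<bar>F x - G x\<bar> \<le> B" for x using B by blast
    fix \<phi> :: "real \<Rightarrow> real" assume "\<phi> \<in> schwartz"
    moreover have "distD m (\<lambda>x. F x - G x) \<phi> = 0" using distD_diff_Bc[OF F G, of m] eq by simp
    ultimately show "(\<integral>x. (F x - G x) * (deriv ^^ m) \<phi> x \<partial>lborel) = 0"
      by (simp add: distD_def)
  qed
  then show ?thesis by auto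
qed

lemma norm_Ac_distD:
  assumes "F \<in> Bc"
  shows "norm_Ac m (distD m F) = (SUP x. \<bar>F x\<bar>)"
proof -
  define G where "G = (SOME G. G \<in> Bc \<and> distD m F = distD m G)"
  have "G \<in> Bc \<and> distD m F = distD m G" unfolding G_def by (rule someI[of _ F]) (use assms in blast)
  then have "G = F" using Bc_distD_unique[OF _ assms] by metis
  then show ?thesis by (simp add: norm_Ac_def G_def Let_def)
qed

lemma norm_L1n_representative:
  assumes "f \<in> L1n n"
  obtains F where "integrable lborel F" "f = distD n F" "norm_L1n n f = (\<integral>x. \<bar>F x\<bar> \<partial>lborel)"
proof -
  have ex: "\<exists>F. integrable lborel F \<and> f = distD n F" using assms by (auto simp: L1n_def)
  define F where "F = (SOME F. integrable lborel F \<and> f = distD n F)"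
  have "integrable lborel F \<and> f = distD n F" unfolding F_def by (rule someI_ex[OF ex])
  then show ?thesis using that by (auto simp: norm_L1n_def F_def Let_def)
qed

lemma L1n_subset_Ac: "L1n n \<subseteq> Ac (Suc n)"
proof
  fix f assume "f \<in> L1n n"
  then obtain F where F: "integrable lborel F" "f = distD n F" by (auto simp: L1n_def)
  then have "primitive F \<in> Bc \<and> f = distD (Suc n) (primitive F)"
    using primitive_in_Bc distD_primitive by simp
  then show "f \<in> Ac (Suc n)" unfolding Ac_def by blast
qed

lemma L1n_zero: "(\<lambda>\<phi>. 0) \<in> L1n n"
proof -
  have "distD n (\<lambda>x. 0) = (\<lambda>\<phi>. 0)" by (rule ext) (simp add: distD_def)
  then show ?thesis unfolding L1n_def by (intro CollectI exI[of _ "\<lambda>x. 0"]) auto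
qed

lemma L1n_add:
  assumes "f \<in> L1n n" "g \<in> L1n n"
  shows "(\<lambda>\<phi>. f \<phi> + g \<phi>) \<in> L1n n"
proof -
  obtain F G where F: "integrable lborel F" "f = distD n F" and G: "integrable lborel G" "g = distD n G"
    using assms by (auto simp: L1n_def)
  have "(\<lambda>\<phi>. f \<phi> + g \<phi>) = distD n (\<lambda>x. F x + G x)"
  proof
    fix \<phi>
    show "f \<phi> + g \<phi> = distD n (\<lambda>x. F x + G x) \<phi>"
    proof (cases "\<phi> \<in> schwartz")
      case True
      have "(\<integral>x. (F x + G x) * (deriv ^^ n) \<phi> x \<partial>lborel)
            = (\<integral>x. F x * (deriv ^^ n) \<phi> x + G x * (deriv ^^ n) \<phi> x \<partial>lborel)"
        by (simp add: algebra_simps)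
      also have "\<dots> = (\<integral>x. F x * (deriv ^^ n) \<phi> x \<partial>lborel) + (\<integral>x. G x * (deriv ^^ n) \<phi> x \<partial>lborel)"
        by (rule Bochner_Integration.integral_add[OF integrable_mult_schwartz[OF F(1) True]
              integrable_mult_schwartz[OF G(1) True]])
      finally show ?thesis using True by (simp add: F(2) G(2) distD_def distrib_left)
    qed (simp add: F(2) G(2) distD_def)
  qed
  moreover have "integrable lborel (\<lambda>x. F x + G x)" using F G by auto
  ultimately show ?thesis by (auto simp: L1n_def)
qed

lemma L1n_scale:
  assumes "f \<in> L1n n"
  shows "(\<lambda>\<phi>. c * f \<phi>) \<in> L1n n"
proof -
  obtain F where F: "integrable lborel F" "f = distD n F" using assms by (auto simp: L1n_def)
  have "(\<lambda>\<phi>. c * f \<phi>) = distD n (\<lambda>x. c * F x)"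
    by (rule ext) (simp add: F distD_def mult.assoc)
  moreover have "integrable lborel (\<lambda>x. c * F x)" using F by auto
  ultimately show ?thesis by (auto simp: L1n_def)
qed

section \<open>An element of Ac (n+1) outside L1n n\<close>

text \<open>wave x = sin(pi x)^2 / sqrt(1+x^2) is continuous, vanishes at both infinities and at
  the integers, and has peaks 1/sqrt(1+(k+1/2)^2) at the half-integers.\<close>
definition wave :: "real \<Rightarrow> real" where
  "wave x = (sin (pi * x))\<^sup>2 / sqrt (1 + x\<^sup>2)"

definition wave_deriv :: "real \<Rightarrow> real" where
  "wave_deriv x = 2 * pi * sin (pi * x) * cos (pi * x) / sqrt (1 + x\<^sup>2)
          - (sin (pi * x))\<^sup>2 * x / (sqrt (1 + x\<^sup>2) * (1 + x\<^sup>2))"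

lemma one_plus_square_pos: "0 < 1 + (x::real)\<^sup>2"
  by (simp add: add_pos_nonneg)

lemma wave_has_deriv: "(wave has_real_derivative wave_deriv x) (at x)"
proof -
  let ?r = "sqrt (1 + x\<^sup>2)" and ?S = "sin (pi * x)" and ?C = "cos (pi * x)"
  have r: "0 < ?r" "?r * ?r = 1 + x\<^sup>2" using one_plus_square_pos[of x] by simp_all
  have quotient_rule_simp:
    "(2 * S * (pi * C) * r - S\<^sup>2 * (x / r)) / (r * r) = 2 * pi * S * C / r - S\<^sup>2 * x / (r * q)"
    if "0 < r" "r * r = q" for r q S C :: real
    using that(1) by (simp add: that(2)[symmetric] field_simps power2_eq_square)
  have d1: "((\<lambda>x. (sin (pi * x))\<^sup>2) has_real_derivative 2 * ?S * (pi * ?C)) (at x)"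
    by (auto intro!: derivative_eq_intros)
  have d2: "((\<lambda>x. sqrt (1 + x\<^sup>2)) has_real_derivative x / ?r) (at x)"
    using one_plus_square_pos[of x] by (auto intro!: derivative_eq_intros simp: field_simps)
  have "(wave has_real_derivative (2 * ?S * (pi * ?C) * ?r - ?S\<^sup>2 * (x / ?r)) / (?r * ?r)) (at x)"
    unfolding wave_def[abs_def] by (rule DERIV_divide[OF d1 d2]) (use r in simp)
  moreover have "(2 * ?S * (pi * ?C) * ?r - ?S\<^sup>2 * (x / ?r)) / (?r * ?r) = wave_deriv x"
    unfolding wave_deriv_def using quotient_rule_simp r by blast
  ultimately show ?thesis by simp
qed

lemma wave_deriv_continuous_on: "continuous_on UNIV wave_deriv"
  unfolding wave_deriv_def using one_plus_square_pos
  by (intro continuous_intros) (auto simp: add_nonneg_eq_0_iff)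

lemma wave_nonneg: "0 \<le> wave x"
  by (simp add: wave_def)

lemma wave_le: "wave x \<le> inverse (sqrt (1 + x\<^sup>2))"
proof -
  have "(sin (pi * x))\<^sup>2 \<le> 1" by (simp add: abs_square_le_1)
  moreover have "0 < sqrt (1 + x\<^sup>2)" using one_plus_square_pos by simp
  ultimately show ?thesis unfolding wave_def by (simp add: divide_right_mono field_simps)
qed

lemma inverse_sqrt_one_plus_square_le_1: "inverse (sqrt (1 + x\<^sup>2)) \<le> 1"
  by (simp add: inverse_le_1_iff)

lemma inverse_sqrt_one_plus_square_le: "x \<noteq> 0 \<Longrightarrow> inverse (sqrt (1 + x\<^sup>2)) \<le> inverse \<bar>x\<bar>"
proof -
  assume "x \<noteq> 0"
  have "sqrt (x\<^sup>2) \<le> sqrt (1 + x\<^sup>2)" by (rule real_sqrt_le_mono) simp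
  then show ?thesis using \<open>x \<noteq> 0\<close> by (intro le_imp_inverse_le) auto
qed

lemma wave_of_int: "wave (real k) = 0" "wave (- real k) = 0"
  by (simp_all add: wave_def)

lemma wave_half_int: "wave (real k + 1/2) = inverse (sqrt (1 + (real k + 1/2)\<^sup>2))"
proof -
  have "sin (pi * (real k + 1/2)) = sin (pi * real k + pi / 2)"
    by (simp only: distrib_left) (simp only: times_divide_eq_right mult_1_right)
  also have "\<dots> = cos (pi * real k)"
    by (simp only: sin_add cos_pi_half sin_pi_half mult_zero_right mult_1_right add_0_left)
  also have "\<dots> = (-1) ^ k" by (rule cos_npi2)
  finally have "(sin (pi * (real k + 1/2)))\<^sup>2 = 1" by (simp add: power2_eq_square)
  then show ?thesis unfolding wave_def by (simp add: inverse_eq_divide)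
qed

lemma wave_even: "wave (- x) = wave x"
  by (simp add: wave_def)

lemma wave_tendsto_at_top: "(wave \<longlongrightarrow> 0) at_top"
proof (rule tendsto_sandwich[of "\<lambda>x. 0" _ _ "\<lambda>x. inverse x"])
  show "eventually (\<lambda>x. 0 \<le> wave x) at_top" by (simp add: wave_nonneg)
  show "eventually (\<lambda>x. wave x \<le> inverse x) at_top"
    using eventually_gt_at_top[of 0]
  proof eventually_elim
    fix x :: real assume "0 < x"
    then show "wave x \<le> inverse x" using wave_le[of x] inverse_sqrt_one_plus_square_le[of x] by simp
  qed
  show "((\<lambda>x::real. inverse x) \<longlongrightarrow> 0) at_top" by (rule tendsto_inverse_0_at_top[OF filterlim_ident])
qed simp

lemma wave_in_Bc: "wave \<in> Bc"
proof -
  have "continuous_on UNIV wave"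
    using wave_has_deriv by (meson DERIV_isCont continuous_at_imp_continuous_on)
  moreover have "(wave \<longlongrightarrow> 0) at_bot"
    unfolding filterlim_at_bot_mirror using wave_tendsto_at_top by (simp add: wave_even)
  ultimately show ?thesis unfolding Bc_def using wave_tendsto_at_top by blast
qed

definition wave_peak :: "nat \<Rightarrow> real" where
  "wave_peak k = wave (real k + 1/2)"

text \<open>The peaks are comparable to the harmonic series, so their partial sums are unbounded.\<close>
lemma wave_peaks_unbounded: "\<not> (\<forall>K. (\<Sum>k<K. wave_peak k) \<le> M)"
proof
  assume H: "\<forall>K. (\<Sum>k<K. wave_peak k) \<le> M"
  have summable: "summable wave_peak"
    by (rule summableI_nonneg_bounded[of wave_peak M]) (use H in \<open>auto simp: wave_peak_def wave_nonneg\<close>)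
  have le: "inverse (real k + 2) \<le> wave_peak k" for k
  proof -
    have "sqrt (1 + (real k + 1/2)\<^sup>2) \<le> sqrt ((real k + 2)\<^sup>2)"
      by (intro real_sqrt_le_mono) (simp add: power2_eq_square algebra_simps)
    then have "sqrt (1 + (real k + 1/2)\<^sup>2) \<le> real k + 2" by simp
    moreover have "0 < sqrt (1 + (real k + 1/2)\<^sup>2)" using one_plus_square_pos by simp
    ultimately show ?thesis unfolding wave_peak_def wave_half_int by (intro le_imp_inverse_le) auto
  qed
  have "summable (\<lambda>k. inverse (real k + 2))"
    by (rule summable_comparison_test'[OF summable, where N=0]) (use le in simp)
  then have "summable (\<lambda>k. inverse (real (k + 2)))" by (simp add: add.commute)
  then have "summable (\<lambda>n. inverse (real n))" by (rule summable_iff_shift[THEN iffD1])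
  then show False using not_summable_harmonic[where 'a=real] by simp
qed

definition wave_trunc :: "nat \<Rightarrow> real \<Rightarrow> real" where
  "wave_trunc K x = (if \<bar>x\<bar> \<le> real K then wave x else 0)"

definition wave_deriv_trunc :: "nat \<Rightarrow> real \<Rightarrow> real" where
  "wave_deriv_trunc K x = indicator {- real K..real K} x * wave_deriv x"

lemma wave_deriv_trunc_integrable: "integrable lborel (wave_deriv_trunc K)"
proof -
  have "set_integrable lborel {- real K..real K} wave_deriv"
    by (rule borel_integrable_atLeastAtMost') (rule continuous_on_subset[OF wave_deriv_continuous_on], simp)
  then show ?thesis by (simp add: set_integrable_def wave_deriv_trunc_def[abs_def])
qed

text \<open>The truncated wave is the primitive of the truncated derivative, since wave vanishes at
  the integers -K and K.\<close>
lemma primitive_wave_deriv_trunc: "primitive (wave_deriv_trunc K) = wave_trunc K"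
proof
  fix x
  show "primitive (wave_deriv_trunc K) x = wave_trunc K x"
  proof (cases "x < - real K")
    case True
    have "primitive (wave_deriv_trunc K) x = (\<integral>t. (0::real) \<partial>(lborel::real measure))"
      unfolding primitive_def
      by (rule Bochner_Integration.integral_cong) (use True in \<open>auto simp: wave_deriv_trunc_def indicator_def\<close>)
    then show ?thesis using True by (simp add: wave_trunc_def)
  next
    case False
    define b where "b = min x (real K)"
    have ab: "- real K \<le> b" using False by (simp add: b_def)
    have "primitive (wave_deriv_trunc K) x = (\<integral>t. indicator {- real K..b} t *\<^sub>R wave_deriv t \<partial>lborel)"
      unfolding primitive_def
      by (rule Bochner_Integration.integral_cong) (auto simp: wave_deriv_trunc_def indicator_def b_def)
    also have "\<dots> = wave b - wave (- real K)"
    proof (rule integral_FTC_atLeastAtMost[OF ab])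
      show "continuous_on {- real K..b} wave_deriv"
        by (rule continuous_on_subset[OF wave_deriv_continuous_on]) simp
      show "(wave has_vector_derivative wave_deriv t) (at t within {- real K..b})" for t
        using wave_has_deriv[of t]
        by (simp add: has_real_derivative_iff_has_vector_derivative[symmetric] has_field_derivative_at_within)
    qed
    also have "\<dots> = wave_trunc K x"
      using False by (cases "x \<le> real K") (simp_all add: b_def wave_trunc_def wave_of_int)
    finally show ?thesis .
  qed
qed

lemma wave_trunc_in_Bc: "wave_trunc K \<in> Bc"
  using primitive_in_Bc[OF wave_deriv_trunc_integrable] primitive_wave_deriv_trunc by simp

lemma distD_wave_deriv_trunc: "distD n (wave_deriv_trunc K) = distD (Suc n) (wave_trunc K)"
  using distD_primitive[OF wave_deriv_trunc_integrable, of n K] primitive_wave_deriv_trunc[of K] by simp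

lemma wave_trunc_uniform_approx: "\<bar>wave_trunc K x - wave x\<bar> \<le> inverse (sqrt (1 + (real K)\<^sup>2))"
proof (cases "\<bar>x\<bar> \<le> real K")
  case False
  then have "(real K)\<^sup>2 \<le> x\<^sup>2" by (metis abs_of_nat abs_le_square_iff linorder_not_le less_imp_le)
  then have "inverse (sqrt (1 + x\<^sup>2)) \<le> inverse (sqrt (1 + (real K)\<^sup>2))"
    by (intro le_imp_inverse_le) (auto simp: add_pos_nonneg)
  then show ?thesis using False wave_le[of x] wave_nonneg[of x] by (simp add: wave_trunc_def)
qed (simp add: wave_trunc_def)

lemma sum_indicator_half_intervals_le_1:
  "(\<Sum>k<K. indicator {real k<..real k + 1/2} t) \<le> (1::real)"
proof -
  have "(\<Sum>k<K. indicator {real k<..real k + 1/2} t)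
        = (if \<exists>k<K. t \<in> {real k<..real k + 1/2} then 1 else (0::real))"
  proof (induction K)
    case (Suc K)
    have disjoint: "\<not> (\<exists>k<K. t \<in> {real k<..real k + 1/2})" if "t \<in> {real K<..real K + 1/2}"
    proof
      assume "\<exists>k<K. t \<in> {real k<..real k + 1/2}"
      then obtain k where "k < K" "t \<le> real k + 1/2" by auto
      then have "real k + 1 \<le> real K" by linarith
      then show False using \<open>t \<le> real k + 1/2\<close> that by simp
    qed
    show ?case
    proof (cases "t \<in> {real K<..real K + 1/2}")
      case True then show ?thesis using Suc disjoint by auto
    next
      case False then show ?thesis using Suc by (auto simp: less_Suc_eq)
    qed
  qed simp
  then show ?thesis by simp
qed

lemma primitive_variation_le:
  assumes F: "integrable lborel F"
  shows "(\<Sum>k<K. \<bar>primitive F (real k + 1/2) - primitive F (real k)\<bar>) \<le> (\<integral>t. \<bar>F t\<bar> \<partial>lborel)"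
proof -
  let ?I = "\<lambda>k. {real k<..real k + 1/2}"
  have iI: "integrable lborel (\<lambda>t. indicator (?I k) t * \<bar>F t\<bar>)" for k
    using integrable_indicator_mult[of "\<lambda>t. \<bar>F t\<bar>" "?I k"] F by auto
  have "\<bar>primitive F (real k + 1/2) - primitive F (real k)\<bar> \<le> (\<integral>t. indicator (?I k) t * \<bar>F t\<bar> \<partial>lborel)" for k
  proof -
    have "primitive F (real k + 1/2) - primitive F (real k) = (\<integral>t. indicator (?I k) t * F t \<partial>lborel)"
      by (rule primitive_diff[OF F]) simp
    also have "\<bar>\<dots>\<bar> \<le> (\<integral>t. indicator (?I k) t * \<bar>F t\<bar> \<partial>lborel)"
      by (rule integral_abs_bound_integral[OF integrable_indicator_mult[OF F] iI]) (auto simp: indicator_def)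
    finally show ?thesis .
  qed
  then have "(\<Sum>k<K. \<bar>primitive F (real k + 1/2) - primitive F (real k)\<bar>)
             \<le> (\<Sum>k<K. \<integral>t. indicator (?I k) t * \<bar>F t\<bar> \<partial>lborel)"
    by (rule sum_mono)
  also have "\<dots> = (\<integral>t. (\<Sum>k<K. indicator (?I k) t) * \<bar>F t\<bar> \<partial>lborel)"
    by (simp add: Bochner_Integration.integral_sum[symmetric] iI sum_distrib_right)
  also have "\<dots> \<le> (\<integral>t. \<bar>F t\<bar> \<partial>lborel)"
  proof (rule integral_mono)
    show "integrable lborel (\<lambda>t. (\<Sum>k<K. indicator (?I k) t) * \<bar>F t\<bar>)"
      using Bochner_Integration.integrable_sum[of "{..<K}", OF iI] by (simp add: sum_distrib_right)
    show "(\<Sum>k<K. indicator (?I k) t) * \<bar>F t\<bar> \<le> \<bar>F t\<bar>" for t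
      using mult_right_mono[OF sum_indicator_half_intervals_le_1, of "\<bar>F t\<bar>"] by simp
  qed (use F in auto)
  finally show ?thesis .
qed

lemma wave_peaks_le_L1_norm:
  assumes F: "integrable lborel F" and eq: "\<And>x. 0 \<le> x \<Longrightarrow> x \<le> real K \<Longrightarrow> primitive F x = wave x"
  shows "(\<Sum>k<K. wave_peak k) \<le> (\<integral>t. \<bar>F t\<bar> \<partial>lborel)"
proof -
  have "wave_peak k = \<bar>primitive F (real k + 1/2) - primitive F (real k)\<bar>" if "k < K" for k
  proof -
    have "real k + 1/2 \<le> real K" using that by (simp add: nat_less_real_le)
    then show ?thesis using eq[of "real k"] eq[of "real k + 1/2"]
      by (simp add: wave_peak_def wave_of_int wave_nonneg)
  qed
  then have "(\<Sum>k<K. wave_peak k) = (\<Sum>k<K. \<bar>primitive F (real k + 1/2) - primitive F (real k)\<bar>)"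
    by (intro sum.cong) auto
  also have "\<dots> \<le> (\<integral>t. \<bar>F t\<bar> \<partial>lborel)" by (rule primitive_variation_le[OF F])
  finally show ?thesis .
qed

lemma wave_trunc_in_L1n: "distD (Suc n) (wave_trunc K) \<in> L1n n"
  unfolding L1n_def distD_wave_deriv_trunc[symmetric]
  using wave_deriv_trunc_integrable by (intro CollectI exI[of _ "wave_deriv_trunc K"]) simp

text \<open>Part (b): D^(n+1) wave lies in Ac (n+1) but not in L1n n, since any L1 representative
  would have the wave as its primitive, whose variation is infinite.\<close>
lemma wave_not_in_L1n: "distD (Suc n) wave \<notin> L1n n"
proof
  assume "distD (Suc n) wave \<in> L1n n"
  then obtain F where F: "integrable lborel F" "distD (Suc n) wave = distD n F"
    by (auto simp: L1n_def)
  have "primitive F = wave"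
    by (rule Bc_distD_unique[OF primitive_in_Bc[OF F(1)] wave_in_Bc, of "Suc n"])
       (simp add: distD_primitive[OF F(1)] F(2))
  then have "(\<Sum>k<K. wave_peak k) \<le> (\<integral>t. \<bar>F t\<bar> \<partial>lborel)" for K
    by (intro wave_peaks_le_L1_norm[OF F(1)]) simp
  then show False using wave_peaks_unbounded by blast
qed

lemma wave_trunc_tendsto:
  "(\<lambda>k. norm_Ac (Suc n) (\<lambda>\<phi>. distD (Suc n) (wave_trunc k) \<phi> - distD (Suc n) wave \<phi>)) \<longlonglongrightarrow> 0"
proof -
  define e where "e k = inverse (sqrt (1 + (real k)\<^sup>2))" for k :: nat
  have norm_eq: "norm_Ac (Suc n) (\<lambda>\<phi>. distD (Suc n) (wave_trunc k) \<phi> - distD (Suc n) wave \<phi>)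
      = (SUP x. \<bar>wave_trunc k x - wave x\<bar>)" for k
    using norm_Ac_distD[OF Bc_diff[OF wave_trunc_in_Bc wave_in_Bc]]
    by (simp add: distD_diff_Bc[OF wave_trunc_in_Bc wave_in_Bc])
  have bdd: "bdd_above (range (\<lambda>x. \<bar>wave_trunc k x - wave x\<bar>))" for k
    using wave_trunc_uniform_approx by (intro bdd_aboveI2)
  have lower: "0 \<le> (SUP x. \<bar>wave_trunc k x - wave x\<bar>)" for k
    by (rule cSUP_upper2[OF bdd, of 0]) auto
  have upper: "(SUP x. \<bar>wave_trunc k x - wave x\<bar>) \<le> e k" for k
    unfolding e_def by (rule cSUP_least) (auto intro: wave_trunc_uniform_approx)
  have "e \<longlonglongrightarrow> 0"
  proof (rule tendsto_sandwich[of "\<lambda>k. 0" _ _ "\<lambda>k. inverse (real k)"])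
    show "eventually (\<lambda>k. e k \<le> inverse (real k)) sequentially"
      using eventually_gt_at_top[of "0::nat"]
    proof eventually_elim
      fix k :: nat assume "0 < k"
      then have "real k \<noteq> 0" by simp
      from inverse_sqrt_one_plus_square_le[OF this] show "e k \<le> inverse (real k)"
        by (simp add: e_def)
    qed
    show "(\<lambda>k. inverse (real k)) \<longlonglongrightarrow> 0"
      by (rule tendsto_inverse_0_at_top[OF filterlim_real_sequentially])
  qed (simp_all add: e_def)
  from tendsto_sandwich[OF _ _ tendsto_const this] show ?thesis
    unfolding norm_eq using lower upper by simp
qed

text \<open>Part (c): the truncated waves have Ac-norm at most 1 while their L1n-norms dominate the
  unbounded partial sums of the peaks.\<close>
lemma L1n_norm_not_dominated:
  "\<not> (\<exists>c>0. \<forall>f\<in>L1n n. c * norm_L1n n f \<le> norm_Ac (Suc n) f)"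
proof
  assume "\<exists>c>0. \<forall>f\<in>L1n n. c * norm_L1n n f \<le> norm_Ac (Suc n) f"
  then obtain c where c: "c > 0" and H: "\<And>f. f \<in> L1n n \<Longrightarrow> c * norm_L1n n f \<le> norm_Ac (Suc n) f"
    by blast
  have "(\<Sum>k<K. wave_peak k) \<le> 1 / c" for K
  proof -
    let ?f = "distD (Suc n) (wave_trunc K)"
    obtain F where F: "integrable lborel F" "?f = distD n F"
      and N: "norm_L1n n ?f = (\<integral>t. \<bar>F t\<bar> \<partial>lborel)"
      by (rule norm_L1n_representative[OF wave_trunc_in_L1n])
    have "primitive F = wave_trunc K"
      by (rule Bc_distD_unique[OF primitive_in_Bc[OF F(1)] wave_trunc_in_Bc, of "Suc n"])
         (simp add: distD_primitive[OF F(1)] F(2))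
    then have peaks: "(\<Sum>k<K. wave_peak k) \<le> norm_L1n n ?f"
      using wave_peaks_le_L1_norm[OF F(1)] N by (simp add: wave_trunc_def)
    have "norm_Ac (Suc n) ?f = (SUP x. \<bar>wave_trunc K x\<bar>)" by (rule norm_Ac_distD[OF wave_trunc_in_Bc])
    also have "\<dots> \<le> 1"
    proof (rule cSUP_least)
      show "\<bar>wave_trunc K x\<bar> \<le> 1" for x
        using wave_le[of x] wave_nonneg[of x] inverse_sqrt_one_plus_square_le_1[of x]
        by (simp add: wave_trunc_def)
    qed simp
    finally have "c * norm_L1n n ?f \<le> 1" using H[OF wave_trunc_in_L1n, of K] by linarith
    moreover have "(\<Sum>k<K. wave_peak k) * c \<le> norm_L1n n ?f * c"
      using peaks c by (intro mult_right_mono) auto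
    ultimately have "(\<Sum>k<K. wave_peak k) * c \<le> 1" by (simp add: mult.commute)
    then show ?thesis using pos_le_divide_eq[OF c] by blast
  qed
  then show False using wave_peaks_unbounded by blast
qed

theorem mainTheorem17:
  fixes n :: nat
  shows "L1n n \<subseteq> Ac (Suc n)
    \<and> (\<lambda>\<phi>. 0) \<in> L1n n
    \<and> (\<forall>f\<in>L1n n. \<forall>g\<in>L1n n. (\<lambda>\<phi>. f \<phi> + g \<phi>) \<in> L1n n)
    \<and> (\<forall>c::real. \<forall>f\<in>L1n n. (\<lambda>\<phi>. c * f \<phi>) \<in> L1n n)
    \<and> (\<exists>f\<in>Ac (Suc n) - L1n n. \<exists>g::nat \<Rightarrow> ((real \<Rightarrow> real) \<Rightarrow> real).
          (\<forall>k. g k \<in> L1n n) \<and>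
          (\<lambda>k. norm_Ac (Suc n) (\<lambda>\<phi>. g k \<phi> - f \<phi>)) \<longlonglongrightarrow> 0)
    \<and> \<not> (\<exists>c C. c > 0 \<and> C > 0 \<and> (\<forall>f\<in>L1n n.
          c * norm_L1n n f \<le> norm_Ac (Suc n) f \<and> norm_Ac (Suc n) f \<le> C * norm_L1n n f))"
proof (intro conjI)
  show "L1n n \<subseteq> Ac (Suc n)" by (rule L1n_subset_Ac)
  show "(\<lambda>\<phi>. 0) \<in> L1n n" by (rule L1n_zero)
  show "\<forall>f\<in>L1n n. \<forall>g\<in>L1n n. (\<lambda>\<phi>. f \<phi> + g \<phi>) \<in> L1n n" using L1n_add by blast
  show "\<forall>c::real. \<forall>f\<in>L1n n. (\<lambda>\<phi>. c * f \<phi>) \<in> L1n n" using L1n_scale by blast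
  have "distD (Suc n) wave \<in> Ac (Suc n) - L1n n"
    using wave_in_Bc wave_not_in_L1n unfolding Ac_def by blast
  then show "\<exists>f\<in>Ac (Suc n) - L1n n. \<exists>g::nat \<Rightarrow> ((real \<Rightarrow> real) \<Rightarrow> real).
      (\<forall>k. g k \<in> L1n n) \<and> (\<lambda>k. norm_Ac (Suc n) (\<lambda>\<phi>. g k \<phi> - f \<phi>)) \<longlonglongrightarrow> 0"
    using wave_trunc_in_L1n wave_trunc_tendsto
    by (intro bexI[of _ "distD (Suc n) wave"] exI[of _ "\<lambda>k. distD (Suc n) (wave_trunc k)"]) auto
  show "\<not> (\<exists>c C. c > 0 \<and> C > 0 \<and> (\<forall>f\<in>L1n n.
      c * norm_L1n n f \<le> norm_Ac (Suc n) f \<and> norm_Ac (Suc n) f \<le> C * norm_L1n n f))"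
    using L1n_norm_not_dominated by blast
qed

end
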